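(* Let $\Gamma$ be a metrized graph with adequate vertex set $V(\Gamma)$ and $D=\sum_{s\in V(\Gamma)}a_s s$ a divisor with $\deg D\neq-2$. Let $x,y\in\Gamma$. (1) If $x,y$ lie on the same edge $e$ of length $L$ with endpoints $p,q$, and $e$ is not a bridge, then \[g_{\mu_D}(x,y)=\tau_D(x,y)-\tfrac12|x-y|+(x-y)^2\frac{L-r(p,q)}{2L^2}.\] (2) If $x\in e_i$, $y\in e_j$ with $e_i\neq e_j$, neither a bridge, $e_i$ of length $L_i$ with endpoints $p_i$ (coordinate $0$), $q_i$ (coordinate $L_i$), and $e_j$ of length $L_j$ with endpoints $p_j$ (coordinate $0$), $q_j$ (coordinate $L_j$), then \[\begin{aligned}g_{\mu_D}(x,y)=\tau_D(x,y)&+x^2\frac{L_i-r(p_i,q_i)}{2L_i^2}+y^2\frac{L_j-r(p_j,q_j)}{2L_j^2}-\frac{xy}{L_iL_j}\big(j_{p_j}(p_i,q_j)-j_{p_j}(q_i,q_j)\big)\\&-\frac{x}{2L_i}\big(L_i-2j_{p_i}(q_i,p_j)\big)-\frac{y}{2L_j}\big(L_j-2j_{p_j}(p_i,q_j)\big)-\tfrac12 r(p_i,p_j).\end{aligned}\]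
   Context: A metrized graph $\Gamma$ is a finite connected graph each of whose edges is identified with a closed interval $[0,L]$; a point on an edge with endpoints $p$ (at $0$) and $q$ (at $L$) is identified with its coordinate in $[0,L]$. A vertex set is a nonempty finite set containing all points of valence $\neq 2$; it is adequate if there are no loops or parallel edges. An edge is a bridge if deleting its interior disconnects $\Gamma$. $j_z(x,y)$ is the voltage function (Chinburg–Rumely): $\Delta_x j_z(x,y)=\delta_y-\delta_z$, $j_z(z,y)=0$; it is continuous, symmetric in $x,y$, nonnegative. $r(x,y):=j_y(x,x)$ is the resistance function, and $j_s(x,y)=\tfrac12(r(s,x)+r(s,y)-r(x,y))$. For a signed measure $\mu$ with $\mu(\Gamma)=1$, $g_\mu(x,y)=\int j_z(x,y)d\mu(z)-\int_{\Gamma^3}j_z(x,y)d\mu(z)d\mu(x)d\mu(y)$. $\mu_{\mathrm{can}}$ is the unique such measure with $\int j_z(x,x)d\mu(z)$ constant in $x$, and $\tau(\Gamma)$ is half that constant. Divisors $D=\sum a_s s$ have integer coefficients and support in $V(\Gamma)$. The admissible measure is $\mu_D=\frac{1}{\deg D+2}(\sum a_s\delta_s+2\mu_{\mathrm{can}})$, and $g_{\mu_D}$ is the associated Arakelov–Green function; it is known that $g_{\mu_D}(x,y)=\frac{1}{\deg D+2}\big(\sum_s a_sj_s(x,y)+4\tau(\Gamma)-r(x,y)\big)-c_{\mu_D}$ with $c_{\mu_D}=\frac{1}{2(\deg D+2)^2}\big(8\tau(\Gamma)(\deg D+1)+\sum_{s,t}a_sa_tr(s,t)\big)$. With $r(D,x)=\sum_s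 a_s r(s,x)$, the tau function is $\tau_D(x,y)=\frac{1}{\deg D+2}\big(4\tau(\Gamma)+\tfrac12(r(D,x)+r(D,y))\big)-c_{\mu_D}$. *)

theory Defs
  imports "HOL-Analysis.Analysis"
begin

text \<open>
A metrized graph is given by a finite vertex set V, a set E of oriented edges
(p,q) (the point p has coordinate 0, q has coordinate L (p,q)), and edge lengths L.
Adequacy (no loops, no parallel edges) is built into the representation: each
unordered pair of vertices carries at most one edge.
\<close>

datatype 'v mpt = Vert 'v | Inner "'v \<times> 'v" real

definition adj :: "('v \<times> 'v) set \<Rightarrow> ('v \<times> 'v) set" where
  "adj E = E \<union> E\<inverse>"

definition graph_connected :: "'v set \<Rightarrow> ('v \<times> 'v) set \<Rightarrow> bool" where
  "graph_connected V E \<longleftrightarrow> (\<forall>u\<in>V. \<forall>w\<in>V. (u, w) \<in> (adj E)\<^sup>*)"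

definition metrized_graph :: "'v set \<Rightarrow> ('v \<times> 'v) set \<Rightarrow> ('v \<times> 'v \<Rightarrow> real) \<Rightarrow> bool" where
  "metrized_graph V E L \<longleftrightarrow>
     finite V \<and> V \<noteq> {} \<and> E \<subseteq> V \<times> V \<and> (\<forall>e\<in>E. L e > 0) \<and>
     (\<forall>(p, q)\<in>E. p \<noteq> q) \<and> (\<forall>(p, q)\<in>E. (q, p) \<notin> E) \<and>
     graph_connected V E"

definition pt_of :: "('v \<times> 'v \<Rightarrow> real) \<Rightarrow> 'v \<times> 'v \<Rightarrow> real \<Rightarrow> 'v mpt" where
  "pt_of L e t = (if t = 0 then Vert (fst e) else if t = L e then Vert (snd e) else Inner e t)"

definition points :: "'v set \<Rightarrow> ('v \<times> 'v) set \<Rightarrow> ('v \<times> 'v \<Rightarrow> real) \<Rightarrow> 'v mpt set" where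
  "points V E L = Vert ` V \<union> {Inner e t | e t. e \<in> E \<and> 0 < t \<and> t < L e}"

definition is_bridge :: "'v set \<Rightarrow> ('v \<times> 'v) set \<Rightarrow> 'v \<times> 'v \<Rightarrow> bool" where
  "is_bridge V E e \<longleftrightarrow> e \<in> E \<and> \<not> graph_connected V (E - {e})"

definition PL_on :: "real \<Rightarrow> (real \<Rightarrow> real) \<Rightarrow> bool" where
  "PL_on l \<phi> \<longleftrightarrow> (\<exists>K. finite K \<and> K \<subseteq> {0<..<l} \<and>
      (\<forall>a b. 0 \<le> a \<and> a < b \<and> b \<le> l \<and> {a<..<b} \<inter> K = {} \<longrightarrow>
         (\<exists>m c. \<forall>t\<in>{a..b}. \<phi> t = m * t + c)))"

definition rderiv :: "(real \<Rightarrow> real) \<Rightarrow> real \<Rightarrow> real" where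
  "rderiv \<phi> t = (THE m. (\<phi> has_real_derivative m) (at t within {t<..}))"

definition lderiv :: "(real \<Rightarrow> real) \<Rightarrow> real \<Rightarrow> real" where
  "lderiv \<phi> t = (THE m. (\<phi> has_real_derivative m) (at t within {..<t}))"

definition out_slopes ::
  "('v \<times> 'v) set \<Rightarrow> ('v \<times> 'v \<Rightarrow> real) \<Rightarrow> ('v mpt \<Rightarrow> real) \<Rightarrow> 'v mpt \<Rightarrow> real" where
  "out_slopes E L f x = (case x of
      Vert v \<Rightarrow> (\<Sum>e\<in>{e\<in>E. fst e = v}. rderiv (\<lambda>t. f (pt_of L e t)) 0)
              + (\<Sum>e\<in>{e\<in>E. snd e = v}. - lderiv (\<lambda>t. f (pt_of L e t)) (L e))
    | Inner e t \<Rightarrow> rderiv (\<lambda>s. f (pt_of L e s)) t - lderiv (\<lambda>s. f (pt_of L e s)) t)"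

text \<open>f is the voltage function x \<mapsto> j_z(x,y): continuous piecewise linear on Gamma
  (zero off Gamma), Laplacian \<Delta>f = - sum_x sigma_x(f) \<delta>_x equal to \<delta>_y - \<delta>_z,
  and f(z) = 0.\<close>
definition is_voltage ::
  "'v set \<Rightarrow> ('v \<times> 'v) set \<Rightarrow> ('v \<times> 'v \<Rightarrow> real) \<Rightarrow> 'v mpt \<Rightarrow> 'v mpt \<Rightarrow> ('v mpt \<Rightarrow> real) \<Rightarrow> bool" where
  "is_voltage V E L z y f \<longleftrightarrow>
     (\<forall>x. x \<notin> points V E L \<longrightarrow> f x = 0) \<and>
     (\<forall>e\<in>E. PL_on (L e) (\<lambda>t. f (pt_of L e t))) \<and>
     (\<forall>x\<in>points V E L. - out_slopes E L f x = (if x = y then 1 else 0) - (if x = z then 1 else 0)) \<and>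
     f z = 0"

definition jv :: "'v set \<Rightarrow> ('v \<times> 'v) set \<Rightarrow> ('v \<times> 'v \<Rightarrow> real) \<Rightarrow> 'v mpt \<Rightarrow> 'v mpt \<Rightarrow> 'v mpt \<Rightarrow> real" where
  "jv V E L z x y = (THE f. is_voltage V E L z y f) x"

definition res :: "'v set \<Rightarrow> ('v \<times> 'v) set \<Rightarrow> ('v \<times> 'v \<Rightarrow> real) \<Rightarrow> 'v mpt \<Rightarrow> 'v mpt \<Rightarrow> real" where
  "res V E L x y = jv V E L y x x"

text \<open>Signed measures on Gamma of the form sum_v c_v \<delta>_v + density on the edges.\<close>
type_synonym 'v gmeas = "('v \<Rightarrow> real) \<times> ('v \<times> 'v \<Rightarrow> real \<Rightarrow> real)"

definition is_gmeas :: "'v set \<Rightarrow> ('v \<times> 'v) set \<Rightarrow> ('v \<times> 'v \<Rightarrow> real) \<Rightarrow> 'v gmeas \<Rightarrow> bool" where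
  "is_gmeas V E L \<mu> \<longleftrightarrow> (\<forall>v. v \<notin> V \<longrightarrow> fst \<mu> v = 0) \<and>
     (\<forall>e\<in>E. snd \<mu> e absolutely_integrable_on {0..L e})"

definition integ :: "'v set \<Rightarrow> ('v \<times> 'v) set \<Rightarrow> ('v \<times> 'v \<Rightarrow> real) \<Rightarrow> 'v gmeas \<Rightarrow> ('v mpt \<Rightarrow> real) \<Rightarrow> real" where
  "integ V E L \<mu> F = (\<Sum>v\<in>V. fst \<mu> v * F (Vert v))
      + (\<Sum>e\<in>E. integral {0..L e} (\<lambda>t. snd \<mu> e t * F (pt_of L e t)))"

definition is_canonical :: "'v set \<Rightarrow> ('v \<times> 'v) set \<Rightarrow> ('v \<times> 'v \<Rightarrow> real) \<Rightarrow> 'v gmeas \<Rightarrow> bool" where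
  "is_canonical V E L \<mu> \<longleftrightarrow> is_gmeas V E L \<mu> \<and> integ V E L \<mu> (\<lambda>_. 1) = 1 \<and>
     (\<exists>C. \<forall>x\<in>points V E L. integ V E L \<mu> (\<lambda>z. jv V E L z x x) = C)"

definition mu_can :: "'v set \<Rightarrow> ('v \<times> 'v) set \<Rightarrow> ('v \<times> 'v \<Rightarrow> real) \<Rightarrow> 'v gmeas" where
  "mu_can V E L = (SOME \<mu>. is_canonical V E L \<mu>)"

definition tau_graph :: "'v set \<Rightarrow> ('v \<times> 'v) set \<Rightarrow> ('v \<times> 'v \<Rightarrow> real) \<Rightarrow> real" where
  "tau_graph V E L = (let x0 = Vert (SOME v. v \<in> V) in
      integ V E L (mu_can V E L) (\<lambda>z. jv V E L z x0 x0) / 2)"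

definition deg :: "'v set \<Rightarrow> ('v \<Rightarrow> int) \<Rightarrow> int" where
  "deg V a = (\<Sum>v\<in>V. a v)"

definition mu_D :: "'v set \<Rightarrow> ('v \<times> 'v) set \<Rightarrow> ('v \<times> 'v \<Rightarrow> real) \<Rightarrow> ('v \<Rightarrow> int) \<Rightarrow> 'v gmeas" where
  "mu_D V E L a = (\<lambda>v. (of_int (a v) + 2 * fst (mu_can V E L) v) / (of_int (deg V a) + 2),
                   \<lambda>e t. 2 * snd (mu_can V E L) e t / (of_int (deg V a) + 2))"

definition c_mu :: "'v set \<Rightarrow> ('v \<times> 'v) set \<Rightarrow> ('v \<times> 'v \<Rightarrow> real) \<Rightarrow> 'v gmeas \<Rightarrow> real" where
  "c_mu V E L \<mu> = integ V E L \<mu> (\<lambda>z. integ V E L \<mu> (\<lambda>x. integ V E L \<mu> (\<lambda>y. jv V E L z x y)))"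

definition g_mu :: "'v set \<Rightarrow> ('v \<times> 'v) set \<Rightarrow> ('v \<times> 'v \<Rightarrow> real) \<Rightarrow> 'v gmeas \<Rightarrow> 'v mpt \<Rightarrow> 'v mpt \<Rightarrow> real" where
  "g_mu V E L \<mu> x y = integ V E L \<mu> (\<lambda>z. jv V E L z x y) - c_mu V E L \<mu>"

definition res_D :: "'v set \<Rightarrow> ('v \<times> 'v) set \<Rightarrow> ('v \<times> 'v \<Rightarrow> real) \<Rightarrow> ('v \<Rightarrow> int) \<Rightarrow> 'v mpt \<Rightarrow> real" where
  "res_D V E L a x = (\<Sum>s\<in>V. of_int (a s) * res V E L (Vert s) x)"

definition tau_D :: "'v set \<Rightarrow> ('v \<times> 'v) set \<Rightarrow> ('v \<times> 'v \<Rightarrow> real) \<Rightarrow> ('v \<Rightarrow> int) \<Rightarrow> 'v mpt \<Rightarrow> 'v mpt \<Rightarrow> real" where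
  "tau_D V E L a x y = 1 / (of_int (deg V a) + 2) *
      (4 * tau_graph V E L + (res_D V E L a x + res_D V E L a y) / 2) - c_mu V E L (mu_D V E L a)"

end

theory Submission
  imports Defs "Jordan_Normal_Form.Determinant"
begin

text \<open>
  The voltage functions are written down explicitly. On the vertices, \<open>j\<^sub>r\<^sub>o\<^sub>o\<^sub>t(\<cdot>, a)\<close>
  solves a discrete Laplace equation; grounding one vertex makes this linear system
  nonsingular by the maximum principle. Interpolating linearly along the edges and adding a
  tent on the edge through the source gives \<open>j\<^sub>r\<^sub>o\<^sub>o\<^sub>t\<close> everywhere, and moving the ground
  gives every \<open>j\<^sub>z\<close>; the maximum principle again shows that these are the only voltage functions.
  Hence \<open>j\<^sub>z(x, y) = (r(z, x) + r(z, y) - r(x, y)) / 2\<close>.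

  The measure \<open>\<delta>\<^sub>r\<^sub>o\<^sub>o\<^sub>t + \<Delta>(r(\<cdot>, root) / 2)\<close> is canonical: integrating by parts edge by edge
  shows that \<open>\<integral> r(z, x) d\<mu>(z)\<close> does not depend on \<open>x\<close>. So \<open>\<integral> r(z, x) d\<mu>\<^sub>c\<^sub>a\<^sub>n(z) = 2 \<tau>(\<Gamma>)\<close>,
  and integrating the formula for \<open>j\<^sub>z(x, y)\<close> against \<open>\<mu>\<^sub>D\<close> gives
  \<open>g\<^sub>\<mu>\<^sub>D(x, y) = \<tau>\<^sub>D(x, y) - r(x, y) / 2\<close>. The theorem then follows from the explicit
  resistance between points of one or two edges, read off from the interpolation formula for
  \<open>j\<^sub>r\<^sub>o\<^sub>o\<^sub>t\<close>.
\<close>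

section \<open>Piecewise linear functions on an interval\<close>

lemma rderiv_eqI:
  assumes "(f has_real_derivative m) (at t within {t<..})"
  shows "rderiv f t = m"
  unfolding rderiv_def
proof (rule the_equality)
  fix m' assume "(f has_real_derivative m') (at t within {t<..})"
  then show "m' = m" using has_field_derivative_unique[OF _ assms] by simp
qed (rule assms)

lemma lderiv_eqI:
  assumes "(f has_real_derivative m) (at t within {..<t})"
  shows "lderiv f t = m"
  unfolding lderiv_def
proof (rule the_equality)
  fix m' assume "(f has_real_derivative m') (at t within {..<t})"
  then show "m' = m" using has_field_derivative_unique[OF _ assms] by simp
qed (rule assms)

lemma rderiv_affine:
  assumes "d > 0" and "\<forall>u\<in>{t..<t+d}. f u = m * u + c"
  shows "(f has_real_derivative m) (at t within {t<..})" "rderiv f t = m"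
proof -
  have "eventually (\<lambda>u. (f u - f t) / (u - t) = m) (at t within {t<..})"
    unfolding eventually_at_right_field
    using assms by (intro exI[of _ "t + d"]) (auto simp: field_simps)
  then show "(f has_real_derivative m) (at t within {t<..})"
    unfolding has_field_derivative_iff by (rule tendsto_eventually)
  then show "rderiv f t = m" by (rule rderiv_eqI)
qed

lemma lderiv_affine:
  assumes "d > 0" and "\<forall>u\<in>{t-d<..t}. f u = m * u + c"
  shows "(f has_real_derivative m) (at t within {..<t})" "lderiv f t = m"
proof -
  have "eventually (\<lambda>u. (f u - f t) / (u - t) = m) (at_left t)"
    unfolding eventually_at_left_field
    using assms by (intro exI[of _ "t - d"]) (auto simp: field_simps)
  then show "(f has_real_derivative m) (at t within {..<t})"
    unfolding has_field_derivative_iff by (rule tendsto_eventually)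
  then show "lderiv f t = m" by (rule lderiv_eqI)
qed

lemma PL_on_affine_right:
  assumes "PL_on l f" "0 \<le> t" "t < l"
  obtains m c d where "d > 0" "\<forall>u\<in>{t..<t+d}. f u = m * u + c"
proof -
  from assms(1)[unfolded PL_on_def] obtain K where K: "finite K" "K \<subseteq> {0<..<l}"
    and lin0: "\<forall>a b. 0 \<le> a \<and> a < b \<and> b \<le> l \<and> {a<..<b} \<inter> K = {} \<longrightarrow> (\<exists>m c. \<forall>t\<in>{a..b}. f t = m * t + c)"
    by blast
  have lin: "\<And>a b. 0 \<le> a \<Longrightarrow> a < b \<Longrightarrow> b \<le> l \<Longrightarrow> {a<..<b} \<inter> K = {} \<Longrightarrow> \<exists>m c. \<forall>t\<in>{a..b}. f t = m * t + c"
    using lin0 by blast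
  define b where "b = Min (insert l {k\<in>K. k > t})"
  have fin: "finite (insert l {k\<in>K. k > t})" using K by auto
  have bt: "b > t" unfolding b_def using Min_gr_iff[OF fin] assms by auto
  have bl: "b \<le> l" unfolding b_def using Min_le[OF fin] by auto
  have disj: "{t<..<b} \<inter> K = {}"
  proof (rule ccontr)
    assume "{t<..<b} \<inter> K \<noteq> {}"
    then obtain k where k: "k \<in> K" "t < k" "k < b" by auto
    then have "b \<le> k" unfolding b_def using Min_le[OF fin] by auto
    then show False using k by auto
  qed
  obtain m c where mc: "\<forall>u\<in>{t..b}. f u = m * u + c" using lin[OF assms(2) bt bl disj] by auto
  show ?thesis using that[of "b - t"] mc bt by auto
qed

lemma PL_on_affine_left:
  assumes "PL_on l f" "0 < t" "t \<le> l"
  obtains m c d where "d > 0" "\<forall>u\<in>{t-d<..t}. f u = m * u + c"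
proof -
  from assms(1)[unfolded PL_on_def] obtain K where K: "finite K" "K \<subseteq> {0<..<l}"
    and lin0: "\<forall>a b. 0 \<le> a \<and> a < b \<and> b \<le> l \<and> {a<..<b} \<inter> K = {} \<longrightarrow> (\<exists>m c. \<forall>t\<in>{a..b}. f t = m * t + c)"
    by blast
  have lin: "\<And>a b. 0 \<le> a \<Longrightarrow> a < b \<Longrightarrow> b \<le> l \<Longrightarrow> {a<..<b} \<inter> K = {} \<Longrightarrow> \<exists>m c. \<forall>t\<in>{a..b}. f t = m * t + c"
    using lin0 by blast
  define b where "b = Max (insert 0 {k\<in>K. k < t})"
  have fin: "finite (insert 0 {k\<in>K. k < t})" using K by auto
  have bt: "b < t" unfolding b_def using Max_less_iff[OF fin] assms by auto
  have bl: "0 \<le> b" unfolding b_def using Max_ge[OF fin] by auto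
  have disj: "{b<..<t} \<inter> K = {}"
  proof (rule ccontr)
    assume "{b<..<t} \<inter> K \<noteq> {}"
    then obtain k where k: "k \<in> K" "b < k" "k < t" by auto
    then have "k \<le> b" unfolding b_def using Max_ge[OF fin] by auto
    then show False using k by auto
  qed
  obtain m c where mc: "\<forall>u\<in>{b..t}. f u = m * u + c" using lin[OF bl bt assms(3) disj] by auto
  show ?thesis using that[of "t - b"] mc bt by auto
qed

lemma PL_on_has_rderiv:
  assumes "PL_on l f" "0 \<le> t" "t < l"
  shows "(f has_real_derivative rderiv f t) (at t within {t<..})"
proof -
  obtain m c d where "d > 0" "\<forall>u\<in>{t..<t+d}. f u = m * u + c"
    using PL_on_affine_right[OF assms] .
  from rderiv_affine[OF this] show ?thesis by simp
qed

lemma PL_on_has_lderiv: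
  assumes "PL_on l f" "0 < t" "t \<le> l"
  shows "(f has_real_derivative lderiv f t) (at t within {..<t})"
proof -
  obtain m c d where "d > 0" "\<forall>u\<in>{t-d<..t}. f u = m * u + c"
    using PL_on_affine_left[OF assms] .
  from lderiv_affine[OF this] show ?thesis by simp
qed

lemma rderiv_diff:
  assumes "PL_on l f" "PL_on l g" "0 \<le> t" "t < l"
  shows "rderiv (\<lambda>u. f u - g u) t = rderiv f t - rderiv g t"
  using DERIV_diff[OF PL_on_has_rderiv[OF assms(1,3,4)] PL_on_has_rderiv[OF assms(2,3,4)]]
  by (rule rderiv_eqI)

lemma lderiv_diff:
  assumes "PL_on l f" "PL_on l g" "0 < t" "t \<le> l"
  shows "lderiv (\<lambda>u. f u - g u) t = lderiv f t - lderiv g t"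
  using DERIV_diff[OF PL_on_has_lderiv[OF assms(1,3,4)] PL_on_has_lderiv[OF assms(2,3,4)]]
  by (rule lderiv_eqI)

lemma PL_on_diff:
  assumes "PL_on l f" "PL_on l g"
  shows "PL_on l (\<lambda>x. f x - g x)"
proof -
  from assms(1)[unfolded PL_on_def] obtain K1 where K1: "finite K1" "K1 \<subseteq> {0<..<l}"
    and lin1: "\<forall>a b. 0 \<le> a \<and> a < b \<and> b \<le> l \<and> {a<..<b} \<inter> K1 = {} \<longrightarrow> (\<exists>m c. \<forall>t\<in>{a..b}. f t = m * t + c)"
    by blast
  from assms(2)[unfolded PL_on_def] obtain K2 where K2: "finite K2" "K2 \<subseteq> {0<..<l}"
    and lin2: "\<forall>a b. 0 \<le> a \<and> a < b \<and> b \<le> l \<and> {a<..<b} \<inter> K2 = {} \<longrightarrow> (\<exists>m c. \<forall>t\<in>{a..b}. g t = m * t + c)"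
    by blast
  show ?thesis unfolding PL_on_def
  proof (intro exI[of _ "K1 \<union> K2"] conjI allI impI)
    fix a b assume ab: "0 \<le> a \<and> a < b \<and> b \<le> l \<and> {a<..<b} \<inter> (K1 \<union> K2) = {}"
    obtain m1 c1 where 1: "\<forall>t\<in>{a..b}. f t = m1 * t + c1" using lin1 ab by blast
    obtain m2 c2 where 2: "\<forall>t\<in>{a..b}. g t = m2 * t + c2" using lin2 ab by blast
    show "\<exists>m c. \<forall>t\<in>{a..b}. f t - g t = m * t + c"
      using 1 2 by (intro exI[of _ "m1 - m2"] exI[of _ "c1 - c2"]) (auto simp: algebra_simps)
  qed (use K1 K2 in auto)
qed

lemma affine_glue:
  assumes "finite K" "lo < hi"
    and "\<forall>a b. lo \<le> a \<and> a < b \<and> b \<le> hi \<and> {a<..<b} \<inter> K = {} \<longrightarrow> (\<exists>m c. \<forall>t\<in>{a..b}. f t = m * t + c)"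
    and "\<forall>t\<in>{lo<..<hi}. rderiv f t = lderiv f t"
  shows "\<exists>m c. \<forall>t\<in>{lo..hi}. f t = m * t + c"
  using assms
proof (induction K arbitrary: lo hi rule: finite_induct)
  case empty
  then show ?case by auto
next
  case (insert k K)
  have pieces: "\<forall>a b. lo' \<le> a \<and> a < b \<and> b \<le> hi' \<and> {a<..<b} \<inter> K = {} \<longrightarrow> (\<exists>m c. \<forall>t\<in>{a..b}. f t = m * t + c)"
    if "lo \<le> lo'" "hi' \<le> hi" "k \<notin> {lo'<..<hi'}" for lo' hi'
  proof (intro allI impI)
    fix a b assume ab: "lo' \<le> a \<and> a < b \<and> b \<le> hi' \<and> {a<..<b} \<inter> K = {}"
    then have "{a<..<b} \<inter> insert k K = {}" using that by auto
    then show "\<exists>m c. \<forall>t\<in>{a..b}. f t = m * t + c" using insert.prems(2)[rule_format, of a b] ab that by auto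
  qed
  show ?case
  proof (cases "k \<in> {lo<..<hi}")
    case False
    then show ?thesis using insert.IH[OF insert.prems(1) pieces] insert.prems(3) by auto
  next
    case True
    obtain m1 c1 where 1: "\<forall>t\<in>{lo..k}. f t = m1 * t + c1"
      using insert.IH[OF _ pieces, of lo k] True insert.prems(3) by auto
    obtain m2 c2 where 2: "\<forall>t\<in>{k..hi}. f t = m2 * t + c2"
      using insert.IH[OF _ pieces, of k hi] True insert.prems(3) by auto
    have "lderiv f k = m1" by (rule lderiv_affine(2)[of "k - lo"]) (use 1 True in auto)
    moreover have "rderiv f k = m2" by (rule rderiv_affine(2)[of "hi - k"]) (use 2 True in auto)
    ultimately have m: "m1 = m2" using insert.prems(3) True by auto
    have c: "c1 = c2" using 1 2 True m
      by (metis atLeastAtMost_iff greaterThanLessThan_iff less_eq_real_def add_left_cancel)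
    have "\<forall>t\<in>{lo..hi}. f t = m1 * t + c1"
    proof
      fix t assume "t \<in> {lo..hi}"
      then show "f t = m1 * t + c1" using 1 2 m c by (cases "t \<le> k") auto
    qed
    then show ?thesis by blast
  qed
qed

lemma PL_on_affine_if_no_kinks:
  assumes "PL_on l f" "0 < l" "\<forall>t\<in>{0<..<l}. rderiv f t = lderiv f t"
  obtains m c where "\<forall>t\<in>{0..l}. f t = m * t + c"
proof -
  obtain K where "finite K"
    and "\<forall>a b. 0 \<le> a \<and> a < b \<and> b \<le> l \<and> {a<..<b} \<inter> K = {} \<longrightarrow> (\<exists>m c. \<forall>t\<in>{a..b}. f t = m * t + c)"
    using assms(1) unfolding PL_on_def by blast
  from affine_glue[OF this(1) assms(2) this(2) assms(3)] that show ?thesis by blast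
qed

text \<open>On an edge, a voltage function is affine with kinks at the source and at the sink.\<close>

definition kinked :: "real \<Rightarrow> real \<Rightarrow> real \<Rightarrow> real \<Rightarrow> real \<Rightarrow> real \<Rightarrow> real \<Rightarrow> real" where
  "kinked \<alpha> \<beta> g1 b1 g2 b2 t = \<alpha> + \<beta> * t + g1 * \<bar>t - b1\<bar> + g2 * \<bar>t - b2\<bar>"

text \<open>\<open>tent l s t = min s t - s t / l\<close> vanishes at \<open>0\<close> and \<open>l\<close>; its slope drops by \<open>1\<close> at \<open>s\<close>.\<close>

definition tent :: "real \<Rightarrow> real \<Rightarrow> real \<Rightarrow> real" where
  "tent l s t = (s + t - \<bar>t - s\<bar>) / 2 - s * t / l"

definition sgn_right :: "real \<Rightarrow> real \<Rightarrow> real" where "sgn_right t b = (if b \<le> t then 1 else -1)"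
definition sgn_left :: "real \<Rightarrow> real \<Rightarrow> real" where "sgn_left t b = (if b < t then 1 else -1)"

lemma abs_sgn_right: "t \<le> u \<Longrightarrow> (t < b \<Longrightarrow> u \<le> b) \<Longrightarrow> \<bar>u - b\<bar> = sgn_right t b * (u - b)"
  by (auto simp: sgn_right_def)

lemma abs_sgn_left: "u \<le> t \<Longrightarrow> (b < t \<Longrightarrow> b \<le> u) \<Longrightarrow> \<bar>u - b\<bar> = sgn_left t b * (u - b)"
  by (auto simp: sgn_left_def)

lemma rderiv_kinked:
  assumes "0 \<le> t" "t < l" "\<forall>u\<in>{0..l}. f u = kinked \<alpha> \<beta> g1 b1 g2 b2 u"
  shows "rderiv f t = \<beta> + g1 * sgn_right t b1 + g2 * sgn_right t b2"
proof -
  define d where "d = min (l - t) (min (if b1 > t then b1 - t else 1) (if b2 > t then b2 - t else 1))"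
  have "d > 0" using assms(2) unfolding d_def by auto
  moreover have "\<forall>u\<in>{t..<t+d}. f u = (\<beta> + g1 * sgn_right t b1 + g2 * sgn_right t b2) * u
      + (\<alpha> - g1 * sgn_right t b1 * b1 - g2 * sgn_right t b2 * b2)"
  proof
    fix u assume u: "u \<in> {t..<t+d}"
    then have abs: "\<bar>u - b1\<bar> = sgn_right t b1 * (u - b1)" "\<bar>u - b2\<bar> = sgn_right t b2 * (u - b2)"
      unfolding d_def by (auto intro!: abs_sgn_right)
    have fu: "f u = kinked \<alpha> \<beta> g1 b1 g2 b2 u" using assms u unfolding d_def by auto
    show "f u = (\<beta> + g1 * sgn_right t b1 + g2 * sgn_right t b2) * u
      + (\<alpha> - g1 * sgn_right t b1 * b1 - g2 * sgn_right t b2 * b2)"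
      unfolding fu kinked_def abs by (simp add: algebra_simps)
  qed
  ultimately show ?thesis by (rule rderiv_affine(2))
qed

lemma lderiv_kinked:
  assumes "0 < t" "t \<le> l" "\<forall>u\<in>{0..l}. f u = kinked \<alpha> \<beta> g1 b1 g2 b2 u"
  shows "lderiv f t = \<beta> + g1 * sgn_left t b1 + g2 * sgn_left t b2"
proof -
  define d where "d = min t (min (if b1 < t then t - b1 else 1) (if b2 < t then t - b2 else 1))"
  have "d > 0" using assms(1) unfolding d_def by auto
  moreover have "\<forall>u\<in>{t-d<..t}. f u = (\<beta> + g1 * sgn_left t b1 + g2 * sgn_left t b2) * u
      + (\<alpha> - g1 * sgn_left t b1 * b1 - g2 * sgn_left t b2 * b2)"
  proof
    fix u assume u: "u \<in> {t-d<..t}"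
    then have abs: "\<bar>u - b1\<bar> = sgn_left t b1 * (u - b1)" "\<bar>u - b2\<bar> = sgn_left t b2 * (u - b2)"
      unfolding d_def by (auto intro!: abs_sgn_left)
    have fu: "f u = kinked \<alpha> \<beta> g1 b1 g2 b2 u" using assms u unfolding d_def by auto
    show "f u = (\<beta> + g1 * sgn_left t b1 + g2 * sgn_left t b2) * u
      + (\<alpha> - g1 * sgn_left t b1 * b1 - g2 * sgn_left t b2 * b2)"
      unfolding fu kinked_def abs by (simp add: algebra_simps)
  qed
  ultimately show ?thesis by (rule lderiv_affine(2))
qed

lemma PL_on_kinked:
  assumes "\<forall>u\<in>{0..l}. f u = kinked \<alpha> \<beta> g1 b1 g2 b2 u"
  shows "PL_on l f"
  unfolding PL_on_def
proof (intro exI[of _ "{b1, b2} \<inter> {0<..<l}"] conjI allI impI)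
  fix a b assume ab: "0 \<le> a \<and> a < b \<and> b \<le> l \<and> {a<..<b} \<inter> ({b1, b2} \<inter> {0<..<l}) = {}"
  define s1 where "s1 = (if b1 \<le> a then 1 else -1::real)"
  define s2 where "s2 = (if b2 \<le> a then 1 else -1::real)"
  have n1: "b1 \<le> a \<or> b \<le> b1"
  proof (rule ccontr)
    assume "\<not> (b1 \<le> a \<or> b \<le> b1)"
    then have "b1 \<in> {a<..<b}" "b1 \<in> {b1, b2} \<inter> {0<..<l}" using ab by auto
    then show False using ab by blast
  qed
  have n2: "b2 \<le> a \<or> b \<le> b2"
  proof (rule ccontr)
    assume "\<not> (b2 \<le> a \<or> b \<le> b2)"
    then have "b2 \<in> {a<..<b}" "b2 \<in> {b1, b2} \<inter> {0<..<l}" using ab by auto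
    then show False using ab by blast
  qed
  show "\<exists>m c. \<forall>t\<in>{a..b}. f t = m * t + c"
  proof (intro exI ballI)
    fix t assume t: "t \<in> {a..b}"
    have a1: "\<bar>t - b1\<bar> = s1 * t - s1 * b1" using n1 t ab unfolding s1_def by auto
    have a2: "\<bar>t - b2\<bar> = s2 * t - s2 * b2" using n2 t ab unfolding s2_def by auto
    have "f t = kinked \<alpha> \<beta> g1 b1 g2 b2 t" using assms t ab by auto
    also have "\<dots> = (\<beta> + g1 * s1 + g2 * s2) * t + (\<alpha> - g1 * s1 * b1 - g2 * s2 * b2)"
      unfolding kinked_def a1 a2 by (simp add: algebra_simps)
    finally show "f t = (\<beta> + g1 * s1 + g2 * s2) * t + (\<alpha> - g1 * s1 * b1 - g2 * s2 * b2)" .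
  qed
qed auto

lemma affine_has_integral:
  fixes a b A B :: real assumes ab: "a \<le> b"
  shows "((\<lambda>t. A + B * t) has_integral (A * (b - a) + B * (b\<^sup>2 - a\<^sup>2) / 2)) {a..b}"
proof -
  have "((\<lambda>t. A + B * t) has_integral ((A * b + B * b\<^sup>2 / 2) - (A * a + B * a\<^sup>2 / 2))) {a..b}"
    by (rule fundamental_theorem_of_calculus[OF ab])
       (auto intro!: derivative_eq_intros simp: power2_eq_square field_simps)
  moreover have "(A * b + B * b\<^sup>2 / 2) - (A * a + B * a\<^sup>2 / 2) = A * (b - a) + B * (b\<^sup>2 - a\<^sup>2) / 2"
    by (simp add: algebra_simps diff_divide_distrib)
  ultimately show ?thesis by (simp only:)
qed

lemma kinked_has_integral:
  assumes "g = 0 \<or> (0 \<le> s \<and> s \<le> l)" "0 \<le> l"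
  shows "((\<lambda>t. kinked \<alpha> \<beta> g s 0 0 t) has_integral (\<alpha> * l + \<beta> * l\<^sup>2 / 2 + g * (s\<^sup>2 + (l - s)\<^sup>2) / 2)) {0..l}"
proof (cases "g = 0")
  case True
  have "((\<lambda>t. \<alpha> + \<beta> * t) has_integral (\<alpha> * (l - 0) + \<beta> * (l\<^sup>2 - 0\<^sup>2) / 2)) {0..l}"
    by (rule affine_has_integral) (use assms in auto)
  then show ?thesis using True by (simp add: kinked_def)
next
  case False
  then have s: "0 \<le> s" "s \<le> l" using assms by auto
  have h1: "((\<lambda>t. (\<alpha> + g * s) + (\<beta> - g) * t) has_integral ((\<alpha> + g * s) * (s - 0) + (\<beta> - g) * (s\<^sup>2 - 0\<^sup>2) / 2)) {0..s}"
    by (rule affine_has_integral) (use s in auto)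
  have h1b: "((\<lambda>t. kinked \<alpha> \<beta> g s 0 0 t) has_integral ((\<alpha> + g * s) * (s - 0) + (\<beta> - g) * (s\<^sup>2 - 0\<^sup>2) / 2)) {0..s}"
  proof (rule has_integral_eq[OF _ h1])
    fix t assume "t \<in> {0..s}"
    then have "\<bar>t - s\<bar> = s - t" by auto
    then show "(\<alpha> + g * s) + (\<beta> - g) * t = kinked \<alpha> \<beta> g s 0 0 t" unfolding kinked_def by (simp add: algebra_simps)
  qed
  have h2: "((\<lambda>t. (\<alpha> - g * s) + (\<beta> + g) * t) has_integral ((\<alpha> - g * s) * (l - s) + (\<beta> + g) * (l\<^sup>2 - s\<^sup>2) / 2)) {s..l}"
    by (rule affine_has_integral) (use s in auto)
  have h2b: "((\<lambda>t. kinked \<alpha> \<beta> g s 0 0 t) has_integral ((\<alpha> - g * s) * (l - s) + (\<beta> + g) * (l\<^sup>2 - s\<^sup>2) / 2)) {s..l}"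
  proof (rule has_integral_eq[OF _ h2])
    fix t assume "t \<in> {s..l}"
    then have "\<bar>t - s\<bar> = t - s" by auto
    then show "(\<alpha> - g * s) + (\<beta> + g) * t = kinked \<alpha> \<beta> g s 0 0 t" unfolding kinked_def by (simp add: algebra_simps)
  qed
  have "((\<lambda>t. kinked \<alpha> \<beta> g s 0 0 t) has_integral
      ((\<alpha> + g * s) * (s - 0) + (\<beta> - g) * (s\<^sup>2 - 0\<^sup>2) / 2 + ((\<alpha> - g * s) * (l - s) + (\<beta> + g) * (l\<^sup>2 - s\<^sup>2) / 2))) {0..l}"
    by (rule has_integral_combine[OF s h1b h2b])
  moreover have "(\<alpha> + g * s) * (s - 0) + (\<beta> - g) * (s\<^sup>2 - 0\<^sup>2) / 2 + ((\<alpha> - g * s) * (l - s) + (\<beta> + g) * (l\<^sup>2 - s\<^sup>2) / 2)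
     = \<alpha> * l + \<beta> * l\<^sup>2 / 2 + g * (s\<^sup>2 + (l - s)\<^sup>2) / 2"
    by (simp add: power2_eq_square field_simps)
  ultimately show ?thesis by (simp only:)
qed

lemma integrable_mult_continuous:
  fixes f g :: "real \<Rightarrow> real"
  assumes "f absolutely_integrable_on {a..b}" "continuous_on {a..b} g"
  shows "(\<lambda>t. f t * g t) integrable_on {a..b}"
proof -
  have m: "g \<in> borel_measurable (lebesgue_on {a..b})"
    by (rule continuous_imp_measurable_on_sets_lebesgue[OF assms(2)]) simp
  have bd: "bounded (g ` {a..b})"
    using compact_continuous_image[OF assms(2)] compact_imp_bounded by auto
  have "(\<lambda>t. g t * f t) absolutely_integrable_on {a..b}"
    by (rule absolutely_integrable_bounded_measurable_product_real[OF m _ bd assms(1)]) simp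
  then show ?thesis by (simp add: absolutely_integrable_on_def mult.commute)
qed

section \<open>Square linear systems\<close>

lemma mat_mult_vec_solvable:
  fixes A :: "real mat"
  assumes A: "A \<in> carrier_mat n n" and ker: "\<And>x. x \<in> carrier_vec n \<Longrightarrow> A *\<^sub>v x = 0\<^sub>v n \<Longrightarrow> x = 0\<^sub>v n"
    and b: "b \<in> carrier_vec n"
  obtains x where "x \<in> carrier_vec n" "A *\<^sub>v x = b"
proof -
  have "Determinant.det A \<noteq> 0"
    using det_0_iff_vec_prod_zero[OF A] ker by auto
  then have "A \<in> Units (ring_mat TYPE(real) n ())" using det_non_zero_imp_unit[OF A] by auto
  then obtain B where B: "B \<in> carrier_mat n n" "A * B = 1\<^sub>m n"
    unfolding Units_def by (auto simp: ring_mat_simps)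
  show ?thesis
  proof
    show "B *\<^sub>v b \<in> carrier_vec n" using B b by simp
    show "A *\<^sub>v (B *\<^sub>v b) = b" using assoc_mult_mat_vec[OF A B(1) b] B(2) b by simp
  qed
qed

lemma finite_linear_system_solvable:
  fixes M :: "'a \<Rightarrow> 'a \<Rightarrow> real"
  assumes V: "finite V"
    and inj: "\<And>u x. \<forall>v\<in>V. (\<Sum>y\<in>V. M v y * u y) = 0 \<Longrightarrow> x \<in> V \<Longrightarrow> u x = 0"
  shows "\<exists>u. \<forall>v\<in>V. (\<Sum>y\<in>V. M v y * u y) = c v"
proof -
  define n where "n = card V"
  obtain h where h: "bij_betw h {0..<n} V"
    using ex_bij_betw_nat_finite[OF V] unfolding n_def by blast
  have h_inj: "inj_on h {0..<n}" and h_img: "h ` {0..<n} = V"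
    using h unfolding bij_betw_def by blast+
  define g where "g = the_inv_into {0..<n} h"
  have g: "g y < n" "h (g y) = y" if "y \<in> V" for y
    using that h_img the_inv_into_into[OF h_inj, of y "{0..<n}"] f_the_inv_into_f[OF h_inj, of y]
    unfolding g_def by auto
  have g_h: "g (h i) = i" if "i < n" for i
    using the_inv_into_f_f[OF h_inj] that unfolding g_def by simp
  define A where "A = mat n n (\<lambda>(i, j). M (h i) (h j))"
  have A: "A \<in> carrier_mat n n" unfolding A_def by simp
  have A_mult: "(A *\<^sub>v x) $ i = (\<Sum>y\<in>V. M (h i) y * x $ g y)" if "i < n" "x \<in> carrier_vec n" for i x
  proof -
    have "(A *\<^sub>v x) $ i = (\<Sum>j = 0..<n. M (h i) (h j) * x $ g (h j))"
      using that g_h by (auto simp: A_def scalar_prod_def intro!: sum.cong)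
    also have "\<dots> = (\<Sum>y\<in>V. M (h i) y * x $ g y)"
      by (rule sum.reindex_bij_betw[OF h])
    finally show ?thesis .
  qed
  have "x = 0\<^sub>v n" if x: "x \<in> carrier_vec n" "A *\<^sub>v x = 0\<^sub>v n" for x
  proof -
    have ker: "\<forall>v\<in>V. (\<Sum>y\<in>V. M v y * x $ g y) = 0"
    proof
      fix v assume v: "v \<in> V"
      have "(A *\<^sub>v x) $ g v = 0" using x(2) g(1)[OF v] by simp
      then show "(\<Sum>y\<in>V. M v y * x $ g y) = 0" using A_mult[OF g(1)[OF v] x(1)] g(2)[OF v] by simp
    qed
    have "x $ i = 0" if "i < n" for i
    proof -
      have "h i \<in> V" using h_img that by auto
      from inj[OF ker this] show ?thesis using g_h[OF that] by simp
    qed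
    then show "x = 0\<^sub>v n" using x(1) by (intro eq_vecI) auto
  qed
  then obtain x where x: "x \<in> carrier_vec n" "A *\<^sub>v x = vec n (\<lambda>i. c (h i))"
    by (rule mat_mult_vec_solvable[OF A]) auto
  have "(\<Sum>y\<in>V. M v y * x $ g y) = c v" if "v \<in> V" for v
    using A_mult[OF g(1)[OF that] x(1)] g[OF that] x(2) by simp
  then show ?thesis by (intro exI[of _ "\<lambda>y. x $ g y"]) simp
qed

section \<open>The discrete Laplacian of a metrized graph\<close>

locale mgraph =
  fixes V :: "'v set" and E :: "('v \<times> 'v) set" and L :: "'v \<times> 'v \<Rightarrow> real"
  assumes metrized: "metrized_graph V E L"
begin

lemma finite_V: "finite V" and V_nonempty: "V \<noteq> {}" and E_subset: "E \<subseteq> V \<times> V"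
  and L_pos: "e \<in> E \<Longrightarrow> L e > 0" and connected_VE: "graph_connected V E"
  using metrized unfolding metrized_graph_def by auto

lemma finite_E: "finite E"
  using finite_subset[OF E_subset] finite_V by auto

lemma fst_in_V: "e \<in> E \<Longrightarrow> fst e \<in> V" and snd_in_V: "e \<in> E \<Longrightarrow> snd e \<in> V"
  using E_subset by auto

lemma finite_out_edges: "finite {e\<in>E. fst e = v}" and finite_in_edges: "finite {e\<in>E. snd e = v}"
  using finite_E by auto

lemma sum_group_fst: "(\<Sum>v\<in>V. \<Sum>e\<in>{e\<in>E. fst e = v}. h e) = (\<Sum>e\<in>E. h e)"
proof -
  have "fst ` E \<subseteq> V" using fst_in_V by auto
  from sum.group[OF finite_E finite_V this, of h] show ?thesis by simp
qed

lemma sum_group_snd: "(\<Sum>v\<in>V. \<Sum>e\<in>{e\<in>E. snd e = v}. h e) = (\<Sum>e\<in>E. h e)"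
proof -
  have "snd ` E \<subseteq> V" using snd_in_V by auto
  from sum.group[OF finite_E finite_V this, of h] show ?thesis by simp
qed

lemma sum_fst_mult:
  fixes h :: "'v \<Rightarrow> real"
  shows "(\<Sum>e\<in>E. h (fst e) * k e) = (\<Sum>v\<in>V. h v * (\<Sum>e\<in>{e\<in>E. fst e = v}. k e))"
  unfolding sum_group_fst[symmetric] sum_distrib_left by (intro sum.cong) auto

lemma sum_snd_mult:
  fixes h :: "'v \<Rightarrow> real"
  shows "(\<Sum>e\<in>E. h (snd e) * k e) = (\<Sum>v\<in>V. h v * (\<Sum>e\<in>{e\<in>E. snd e = v}. k e))"
  unfolding sum_group_snd[symmetric] sum_distrib_left by (intro sum.cong) auto

text \<open>\<open>lap u v\<close> is the total outgoing slope at \<open>v\<close> of the edgewise linear interpolation of \<open>u\<close>,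
  i.e. minus the discrete Laplacian in the sign convention of \<open>\<Delta>\<close>.\<close>

definition lap :: "('v \<Rightarrow> real) \<Rightarrow> 'v \<Rightarrow> real" where
  "lap u v = (\<Sum>e\<in>{e\<in>E. fst e = v}. (u (snd e) - u v) / L e) + (\<Sum>e\<in>{e\<in>E. snd e = v}. (u (fst e) - u v) / L e)"

lemma lap_edge_form:
  "lap u v = (\<Sum>e\<in>{e\<in>E. fst e = v}. (u (snd e) - u (fst e)) / L e) + (\<Sum>e\<in>{e\<in>E. snd e = v}. (u (fst e) - u (snd e)) / L e)"
  unfolding lap_def by (auto intro!: arg_cong2[where f="(+)"] sum.cong)

lemma sum_lap_eq_0: "(\<Sum>v\<in>V. lap u v) = 0"
proof -
  have "(\<Sum>v\<in>V. lap u v) = (\<Sum>e\<in>E. (u (snd e) - u (fst e)) / L e) + (\<Sum>e\<in>E. (u (fst e) - u (snd e)) / L e)"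
    unfolding lap_edge_form sum.distrib sum_group_fst sum_group_snd ..
  also have "\<dots> = 0"
    unfolding sum.distrib[symmetric] by (rule sum.neutral) (auto simp: diff_divide_distrib)
  finally show ?thesis .
qed

lemma lap_affine: "lap (\<lambda>x. a * f x + b * g x + c) v = a * lap f v + b * lap g v"
  unfolding lap_def
  by (simp add: sum_distrib_left sum.distrib[symmetric] diff_divide_distrib add_divide_distrib algebra_simps)

lemma green_identity: "(\<Sum>v\<in>V. f v * lap g v) = - (\<Sum>e\<in>E. (f (snd e) - f (fst e)) * (g (snd e) - g (fst e)) / L e)"
proof -
  have "(\<Sum>v\<in>V. f v * lap g v) = (\<Sum>v\<in>V. \<Sum>e\<in>{e\<in>E. fst e = v}. f (fst e) * ((g (snd e) - g (fst e)) / L e))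
      + (\<Sum>v\<in>V. \<Sum>e\<in>{e\<in>E. snd e = v}. f (snd e) * ((g (fst e) - g (snd e)) / L e))"
    unfolding lap_edge_form by (simp add: distrib_left sum_distrib_left sum.distrib)
  also have "\<dots> = (\<Sum>e\<in>E. f (fst e) * ((g (snd e) - g (fst e)) / L e)) + (\<Sum>e\<in>E. f (snd e) * ((g (fst e) - g (snd e)) / L e))"
    unfolding sum_group_fst sum_group_snd ..
  also have "\<dots> = - (\<Sum>e\<in>E. (f (snd e) - f (fst e)) * (g (snd e) - g (fst e)) / L e)"
    unfolding sum.distrib[symmetric] sum_negf[symmetric]
  proof (rule sum.cong)
    fix e assume "e \<in> E"
    then have "L e \<noteq> 0" using L_pos[of e] by linarith
    then show "f (fst e) * ((g (snd e) - g (fst e)) / L e) + f (snd e) * ((g (fst e) - g (snd e)) / L e) =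
      - ((f (snd e) - f (fst e)) * (g (snd e) - g (fst e)) / L e)" by (simp add: field_simps)
  qed simp
  finally show ?thesis .
qed

lemma green_identity_sym: "(\<Sum>v\<in>V. f v * lap g v) = (\<Sum>v\<in>V. g v * lap f v)"
  unfolding green_identity by (simp add: mult.commute)

lemma lap_nonpos_at_max:
  assumes "z \<in> V" "\<forall>x\<in>V. u x \<le> u z"
  shows "\<forall>e\<in>{e\<in>E. fst e = z}. (u (snd e) - u z) / L e \<le> 0"
    and "\<forall>e\<in>{e\<in>E. snd e = z}. (u (fst e) - u z) / L e \<le> 0"
  using assms fst_in_V snd_in_V L_pos by (auto simp: divide_le_0_iff less_imp_le)

lemma lap_zero_at_max:
  assumes z: "z \<in> V" and max: "\<forall>x\<in>V. u x \<le> u z" and "lap u z = 0" and "(z, y) \<in> adj E"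
  shows "u y = u z"
proof -
  note n1 = lap_nonpos_at_max(1)[OF z max] and n2 = lap_nonpos_at_max(2)[OF z max]
  have s1: "(\<Sum>e\<in>{e\<in>E. fst e = z}. (u (snd e) - u z) / L e) \<le> 0" by (rule sum_nonpos) (use n1 in auto)
  have s2: "(\<Sum>e\<in>{e\<in>E. snd e = z}. (u (fst e) - u z) / L e) \<le> 0" by (rule sum_nonpos) (use n2 in auto)
  have z1: "(\<Sum>e\<in>{e\<in>E. fst e = z}. (u (snd e) - u z) / L e) = 0"
    using \<open>lap u z = 0\<close> s1 s2 unfolding lap_def by linarith
  have z2: "(\<Sum>e\<in>{e\<in>E. snd e = z}. (u (fst e) - u z) / L e) = 0"
    using \<open>lap u z = 0\<close> s1 s2 unfolding lap_def by linarith
  have a1: "\<forall>e\<in>{e\<in>E. fst e = z}. (u (snd e) - u z) / L e = 0"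
    using sum_nonneg_eq_0_iff[of "{e\<in>E. fst e = z}" "\<lambda>e. - ((u (snd e) - u z) / L e)"] z1 n1 finite_E
    by (auto simp: sum_negf)
  have a2: "\<forall>e\<in>{e\<in>E. snd e = z}. (u (fst e) - u z) / L e = 0"
    using sum_nonneg_eq_0_iff[of "{e\<in>E. snd e = z}" "\<lambda>e. - ((u (fst e) - u z) / L e)"] z2 n2 finite_E
    by (auto simp: sum_negf)
  from \<open>(z, y) \<in> adj E\<close> have "(\<exists>e\<in>E. fst e = z \<and> snd e = y) \<or> (\<exists>e\<in>E. snd e = z \<and> fst e = y)"
    unfolding adj_def by force
  then show ?thesis using a1 a2 L_pos by force
qed

lemma lap_zero_const:
  assumes lap: "\<forall>v\<in>V. lap u v = 0" and "v \<in> V" "x \<in> V"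
  shows "u v = u x"
proof -
  obtain z where z: "z \<in> V" "u z = Max (u ` V)"
    using finite_V V_nonempty by (metis (mono_tags, lifting) Max_in empty_is_image finite_imageI imageE)
  have max: "\<forall>x\<in>V. u x \<le> u z" using z(2) finite_V by auto
  have "y \<in> V \<and> u y = u z" if "(z, y) \<in> (adj E)\<^sup>*" for y
    using that
  proof (induction rule: rtrancl_induct)
    case (step y y')
    then have "y' \<in> V" using E_subset unfolding adj_def by auto
    moreover have "u y' = u y"
      using lap_zero_at_max[of y u y'] step max lap by auto
    ultimately show ?case using step.IH by simp
  qed (use z in simp)
  then show ?thesis using connected_VE z assms(2,3) unfolding graph_connected_def by metis
qed

definition lap_coeff :: "'v \<Rightarrow> 'v \<Rightarrow> real" where
  "lap_coeff v x = (\<Sum>e\<in>{e\<in>E. fst e = v \<and> snd e = x}. 1 / L e) + (\<Sum>e\<in>{e\<in>E. snd e = v \<and> fst e = x}. 1 / L e)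
     - (if x = v then (\<Sum>e\<in>{e\<in>E. fst e = v}. 1 / L e) + (\<Sum>e\<in>{e\<in>E. snd e = v}. 1 / L e) else 0)"

lemma sum_group_edges:
  assumes "g ` A \<subseteq> V" "A \<subseteq> E"
  shows "(\<Sum>x\<in>V. \<Sum>e\<in>{e\<in>A. g e = x}. h e) = (\<Sum>e\<in>A. h e)"
proof -
  have "finite A" using assms finite_E finite_subset by auto
  from sum.group[OF this finite_V assms(1), of h] show ?thesis by simp
qed

lemma lap_eq_sum_coeff:
  assumes "v \<in> V"
  shows "lap u v = (\<Sum>x\<in>V. lap_coeff v x * u x)"
proof -
  define D where "D = (\<Sum>e\<in>{e\<in>E. fst e = v}. 1 / L e) + (\<Sum>e\<in>{e\<in>E. snd e = v}. 1 / L e)"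
  have out: "(\<Sum>x\<in>V. (\<Sum>e\<in>{e\<in>E. fst e = v \<and> snd e = x}. 1 / L e) * u x) = (\<Sum>e\<in>{e\<in>E. fst e = v}. u (snd e) / L e)"
  proof -
    have "(\<Sum>x\<in>V. (\<Sum>e\<in>{e\<in>E. fst e = v \<and> snd e = x}. 1 / L e) * u x)
        = (\<Sum>x\<in>V. \<Sum>e\<in>{e\<in>{e\<in>E. fst e = v}. snd e = x}. u (snd e) / L e)"
      by (auto simp: sum_distrib_right intro!: sum.cong arg_cong2[where f=sum])
    also have "\<dots> = (\<Sum>e\<in>{e\<in>E. fst e = v}. u (snd e) / L e)"
      by (rule sum_group_edges) (use snd_in_V in auto)
    finally show ?thesis .
  qed
  have "in": "(\<Sum>x\<in>V. (\<Sum>e\<in>{e\<in>E. snd e = v \<and> fst e = x}. 1 / L e) * u x) = (\<Sum>e\<in>{e\<in>E. snd e = v}. u (fst e) / L e)"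
  proof -
    have "(\<Sum>x\<in>V. (\<Sum>e\<in>{e\<in>E. snd e = v \<and> fst e = x}. 1 / L e) * u x)
        = (\<Sum>x\<in>V. \<Sum>e\<in>{e\<in>{e\<in>E. snd e = v}. fst e = x}. u (fst e) / L e)"
      by (auto simp: sum_distrib_right intro!: sum.cong arg_cong2[where f=sum])
    also have "\<dots> = (\<Sum>e\<in>{e\<in>E. snd e = v}. u (fst e) / L e)"
      by (rule sum_group_edges) (use fst_in_V in auto)
    finally show ?thesis .
  qed
  have diag: "(\<Sum>x\<in>V. (if x = v then D else 0) * u x) = D * u v"
  proof -
    have "(\<Sum>x\<in>V. (if x = v then D else 0) * u x) = (\<Sum>x\<in>V. if x = v then D * u v else 0)"
      by (rule sum.cong) auto
    then show ?thesis using assms finite_V by simp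
  qed
  have "(\<Sum>x\<in>V. lap_coeff v x * u x)
      = (\<Sum>e\<in>{e\<in>E. fst e = v}. u (snd e) / L e) + (\<Sum>e\<in>{e\<in>E. snd e = v}. u (fst e) / L e) - D * u v"
    unfolding lap_coeff_def D_def[symmetric] using out "in" diag
    by (simp add: algebra_simps sum.distrib sum_subtractf)
  also have "\<dots> = lap u v"
    unfolding lap_def D_def by (simp add: diff_divide_distrib sum_subtractf sum_distrib_left algebra_simps)
  finally show ?thesis by simp
qed

lemma lap_eq_at_remaining_vertex:
  assumes w: "w \<in> V" and "(\<Sum>v\<in>V. c v) = 0" and "\<forall>v\<in>V - {w}. lap u v = c v"
  shows "lap u w = c w"
proof -
  have "lap u w + (\<Sum>v\<in>V - {w}. lap u v) = 0"
    using sum_lap_eq_0[of u] sum.remove[OF finite_V w, of "lap u"] by simp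
  moreover have "c w + (\<Sum>v\<in>V - {w}. c v) = 0"
    using assms(2) sum.remove[OF finite_V w, of c] by simp
  moreover have "(\<Sum>v\<in>V - {w}. lap u v) = (\<Sum>v\<in>V - {w}. c v)"
    using assms(3) by (intro sum.cong) auto
  ultimately show ?thesis by linarith
qed

lemma lap_solvable:
  assumes w: "w \<in> V" and c: "(\<Sum>v\<in>V. c v) = 0"
  obtains u where "\<forall>v\<in>V. lap u v = c v" "u w = 0"
proof -
  \<comment> \<open>The equation at \<open>w\<close> is redundant, as \<open>lap u\<close> sums to \<open>0\<close>; it is replaced by \<open>u w = 0\<close>.\<close>
  define M where "M v x = (if v = w then (if x = w then 1 else 0) else lap_coeff v x)" for v x
  have M: "(\<Sum>x\<in>V. M v x * u x) = (if v = w then u w else lap u v)" if "v \<in> V" for u v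
  proof (cases "v = w")
    case True
    have "(\<Sum>x\<in>V. M v x * u x) = (\<Sum>x\<in>V. if x = w then u w else 0)"
      using True by (intro sum.cong) (auto simp: M_def)
    then show ?thesis using True w finite_V by simp
  next
    case False
    then show ?thesis using lap_eq_sum_coeff[OF that] by (simp add: M_def)
  qed
  have "u x = 0" if u: "\<forall>v\<in>V. (\<Sum>y\<in>V. M v y * u y) = 0" and x: "x \<in> V" for u x
  proof -
    have uw: "u w = 0" using u[rule_format, OF w] M[OF w] by simp
    have "\<forall>v\<in>V - {w}. lap u v = 0" using u M by (metis DiffE insertCI)
    then have "\<forall>v\<in>V. lap u v = 0" using lap_eq_at_remaining_vertex[OF w, of "\<lambda>_. 0"] by force
    from lap_zero_const[OF this x w] show ?thesis using uw by simp
  qed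
  then have "\<exists>u. \<forall>v\<in>V. (\<Sum>y\<in>V. M v y * u y) = (if v = w then 0 else c v)"
    by (rule finite_linear_system_solvable[OF finite_V])
  then obtain u where u: "\<forall>v\<in>V. (\<Sum>y\<in>V. M v y * u y) = (if v = w then 0 else c v)" ..
  have uw: "u w = 0" using u[rule_format, OF w] M[OF w] by simp
  have "\<forall>v\<in>V - {w}. lap u v = c v" using u M by (metis DiffE insertCI)
  moreover from this have "lap u w = c w" by (rule lap_eq_at_remaining_vertex[OF w c])
  ultimately show ?thesis using that uw by blast
qed

section \<open>The discrete Green function\<close>

definition root :: 'v where "root = (SOME v. v \<in> V)"

lemma root_in_V: "root \<in> V"
  unfolding root_def using V_nonempty by (simp add: some_in_eq)

text \<open>\<open>dgreen a\<close> is the vertex voltage for a unit current entering at \<open>a\<close> and leaving at the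
  grounded vertex \<open>root\<close>, i.e. \<open>j\<^sub>r\<^sub>o\<^sub>o\<^sub>t(\<cdot>, a)\<close> on the vertices.\<close>

definition dgreen :: "'v \<Rightarrow> 'v \<Rightarrow> real" where
  "dgreen a = (SOME u. (\<forall>v\<in>V. lap u v = (if v = root then 1 else 0) - (if v = a then 1 else 0)) \<and> u root = 0)"

lemma dgreen_lap: "a \<in> V \<Longrightarrow> v \<in> V \<Longrightarrow> lap (dgreen a) v = (if v = root then 1 else 0) - (if v = a then 1 else 0)"
  and dgreen_root: "a \<in> V \<Longrightarrow> dgreen a root = 0"
proof -
  assume a: "a \<in> V"
  have "(\<Sum>v\<in>V. (if v = root then 1 else 0) - (if v = a then 1 else (0::real))) = 0"
    using a root_in_V finite_V by (simp add: sum_subtractf)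
  then obtain u where "\<forall>v\<in>V. lap u v = (if v = root then 1 else 0) - (if v = a then 1 else 0)" "u root = 0"
    by (rule lap_solvable[OF root_in_V])
  then have "\<exists>u. (\<forall>v\<in>V. lap u v = (if v = root then 1 else 0) - (if v = a then 1 else 0)) \<and> u root = 0"
    by blast
  from someI_ex[OF this] have "(\<forall>v\<in>V. lap (dgreen a) v = (if v = root then 1 else 0) - (if v = a then 1 else 0))
      \<and> dgreen a root = 0"
    unfolding dgreen_def .
  then show "v \<in> V \<Longrightarrow> lap (dgreen a) v = (if v = root then 1 else 0) - (if v = a then 1 else 0)"
    and "dgreen a root = 0" by auto
qed

lemma sum_mult_lap_dgreen:
  assumes "a \<in> V"
  shows "(\<Sum>v\<in>V. f v * lap (dgreen a) v) = f root - f a"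
proof -
  have "(\<Sum>v\<in>V. f v * lap (dgreen a) v) = (\<Sum>v\<in>V. (if v = root then f v else 0) - (if v = a then f v else 0))"
    using dgreen_lap[OF assms] by (intro sum.cong) auto
  also have "\<dots> = f root - f a"
    using finite_V root_in_V assms by (simp add: sum_subtractf)
  finally show ?thesis .
qed

lemma dgreen_sym: "a \<in> V \<Longrightarrow> b \<in> V \<Longrightarrow> dgreen a b = dgreen b a"
  using green_identity_sym[of "dgreen a" "dgreen b"] sum_mult_lap_dgreen[of a "dgreen b"]
    sum_mult_lap_dgreen[of b "dgreen a"] dgreen_root by simp

end

section \<open>An explicit voltage function\<close>

context mgraph
begin

lemma points_iff: "x \<in> points V E L \<longleftrightarrow> (\<exists>v\<in>V. x = Vert v) \<or> (\<exists>e t. e \<in> E \<and> 0 < t \<and> t < L e \<and> x = Inner e t)"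
  unfolding points_def by auto

lemma Vert_points[simp]: "Vert v \<in> points V E L \<longleftrightarrow> v \<in> V"
  unfolding points_def by auto
lemma Inner_points[simp]: "Inner e t \<in> points V E L \<longleftrightarrow> e \<in> E \<and> 0 < t \<and> t < L e"
  unfolding points_def by blast

lemma pt_of_in_points: "e \<in> E \<Longrightarrow> 0 \<le> t \<Longrightarrow> t \<le> L e \<Longrightarrow> pt_of L e t \<in> points V E L"
  unfolding pt_of_def using fst_in_V snd_in_V by auto

text \<open>The voltage function grounded at \<open>root\<close>, \<open>jroot x z = j\<^sub>r\<^sub>o\<^sub>o\<^sub>t(z, x)\<close>, is written
  down explicitly: on every edge it interpolates its vertex values \<open>dgreen_at x\<close> linearly, and on the
  edge through \<open>x\<close> a tent adds the unit kink at \<open>x\<close>.\<close>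

definition on_edge :: "'v mpt \<Rightarrow> 'v \<times> 'v \<Rightarrow> bool" where
  "on_edge x e = (case x of Inner e' s \<Rightarrow> e' = e | Vert _ \<Rightarrow> False)"
definition coord :: "'v mpt \<Rightarrow> real" where
  "coord x = (case x of Inner e' s \<Rightarrow> s | Vert _ \<Rightarrow> 0)"
definition dgreen_at :: "'v mpt \<Rightarrow> 'v \<Rightarrow> real" where
  "dgreen_at x u = (case x of Vert v \<Rightarrow> dgreen v u | Inner e s \<Rightarrow> (1 - s / L e) * dgreen (fst e) u + (s / L e) * dgreen (snd e) u)"
definition tent_at :: "'v mpt \<Rightarrow> 'v \<times> 'v \<Rightarrow> real \<Rightarrow> real" where
  "tent_at x e t = (if on_edge x e then tent (L e) (coord x) t else 0)"
definition jroot_edge :: "'v mpt \<Rightarrow> 'v \<times> 'v \<Rightarrow> real \<Rightarrow> real" where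
  "jroot_edge x e t = dgreen_at x (fst e) + (dgreen_at x (snd e) - dgreen_at x (fst e)) * t / L e + tent_at x e t"
definition jroot :: "'v mpt \<Rightarrow> 'v mpt \<Rightarrow> real" where
  "jroot x z = (case z of Vert u \<Rightarrow> if u \<in> V then dgreen_at x u else 0
     | Inner e t \<Rightarrow> if e \<in> E \<and> 0 < t \<and> t < L e then jroot_edge x e t else 0)"

lemma on_edge_simps[simp]: "on_edge (Vert v) e = False" "on_edge (Inner e' s) e = (e' = e)"
  unfolding on_edge_def by auto
lemma coord_simps[simp]: "coord (Vert v) = 0" "coord (Inner e' s) = s"
  unfolding coord_def by auto
lemma dgreen_at_simps[simp]: "dgreen_at (Vert v) u = dgreen v u"
  "dgreen_at (Inner e s) u = (1 - s / L e) * dgreen (fst e) u + (s / L e) * dgreen (snd e) u"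
  unfolding dgreen_at_def by auto
lemma jroot_simps[simp]: "jroot x (Vert u) = (if u \<in> V then dgreen_at x u else 0)"
  "jroot x (Inner e t) = (if e \<in> E \<and> 0 < t \<and> t < L e then jroot_edge x e t else 0)"
  unfolding jroot_def by auto

lemma on_edge_Inner: "x \<in> points V E L \<Longrightarrow> on_edge x e \<Longrightarrow> e \<in> E \<and> 0 < coord x \<and> coord x < L e \<and> x = Inner e (coord x)"
  by (cases x) auto

lemma tent_at_0: "x \<in> points V E L \<Longrightarrow> tent_at x e 0 = 0"
  unfolding tent_at_def tent_def using on_edge_Inner[of x e] by auto

lemma tent_at_L: "x \<in> points V E L \<Longrightarrow> tent_at x e (L e) = 0"
  unfolding tent_at_def tent_def using on_edge_Inner[of x e] by auto

lemma jroot_pt_of: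
  assumes "x \<in> points V E L" "e \<in> E" "0 \<le> t" "t \<le> L e"
  shows "jroot x (pt_of L e t) = jroot_edge x e t"
proof -
  have Le: "L e > 0" using L_pos assms by auto
  consider "t = 0" | "t = L e" | "0 < t \<and> t < L e" using assms by linarith
  then show ?thesis
  proof cases
    case 1
    then show ?thesis using tent_at_0[OF assms(1)] fst_in_V[OF assms(2)] unfolding pt_of_def jroot_edge_def by simp
  next
    case 2
    then show ?thesis using tent_at_L[OF assms(1)] snd_in_V[OF assms(2)] Le unfolding pt_of_def jroot_edge_def by simp
  next
    case 3
    then show ?thesis using assms unfolding pt_of_def by simp
  qed
qed

lemma jroot_edge_kinked: "jroot_edge x e t = kinked (dgreen_at x (fst e) + (if on_edge x e then coord x / 2 else 0))
   ((dgreen_at x (snd e) - dgreen_at x (fst e)) / L e + (if on_edge x e then 1/2 - coord x / L e else 0))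
   (if on_edge x e then - 1/2 else 0) (coord x) 0 0 t"
  unfolding jroot_edge_def kinked_def tent_at_def tent_def by (auto simp: field_simps)

text \<open>Moving the ground from \<open>root\<close> to \<open>z\<close>:
  \<open>j\<^sub>z(x, y) = j\<^sub>r\<^sub>o\<^sub>o\<^sub>t(x, y) - j\<^sub>r\<^sub>o\<^sub>o\<^sub>t(x, z) - j\<^sub>r\<^sub>o\<^sub>o\<^sub>t(z, y) + j\<^sub>r\<^sub>o\<^sub>o\<^sub>t(z, z)\<close>.\<close>

definition volt :: "'v mpt \<Rightarrow> 'v mpt \<Rightarrow> 'v mpt \<Rightarrow> real" where
  "volt z y x = (if x \<in> points V E L then jroot y x - jroot z x - jroot y z + jroot z z else 0)"

lemma volt_edge_kinked:
  assumes "y \<in> points V E L" "z \<in> points V E L" "e \<in> E"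
  shows "\<forall>t\<in>{0..L e}. volt z y (pt_of L e t) = kinked
    (dgreen_at y (fst e) + (if on_edge y e then coord y / 2 else 0) - (dgreen_at z (fst e) + (if on_edge z e then coord z / 2 else 0)) - jroot y z + jroot z z)
    ((dgreen_at y (snd e) - dgreen_at y (fst e)) / L e + (if on_edge y e then 1/2 - coord y / L e else 0)
      - ((dgreen_at z (snd e) - dgreen_at z (fst e)) / L e + (if on_edge z e then 1/2 - coord z / L e else 0)))
    (if on_edge y e then - 1/2 else 0) (coord y) (- (if on_edge z e then - 1/2 else 0)) (coord z) t"
proof
  fix t assume "t \<in> {0..L e}"
  then show "volt z y (pt_of L e t) = kinked
    (dgreen_at y (fst e) + (if on_edge y e then coord y / 2 else 0) - (dgreen_at z (fst e) + (if on_edge z e then coord z / 2 else 0)) - jroot y z + jroot z z)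
    ((dgreen_at y (snd e) - dgreen_at y (fst e)) / L e + (if on_edge y e then 1/2 - coord y / L e else 0)
      - ((dgreen_at z (snd e) - dgreen_at z (fst e)) / L e + (if on_edge z e then 1/2 - coord z / L e else 0)))
    (if on_edge y e then - 1/2 else 0) (coord y) (- (if on_edge z e then - 1/2 else 0)) (coord z) t"
    using jroot_pt_of[OF assms(1,3)] jroot_pt_of[OF assms(2,3)] pt_of_in_points[OF assms(3)]
    unfolding volt_def jroot_edge_kinked by (simp add: kinked_def algebra_simps)
qed

definition slope_start :: "'v mpt \<Rightarrow> 'v \<times> 'v \<Rightarrow> real" where
  "slope_start x e = (dgreen_at x (snd e) - dgreen_at x (fst e)) / L e + (if on_edge x e then 1 - coord x / L e else 0)"
definition slope_end :: "'v mpt \<Rightarrow> 'v \<times> 'v \<Rightarrow> real" where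
  "slope_end x e = (dgreen_at x (snd e) - dgreen_at x (fst e)) / L e - (if on_edge x e then coord x / L e else 0)"

lemma volt_rderiv_start:
  assumes "y \<in> points V E L" "z \<in> points V E L" "e \<in> E"
  shows "rderiv (\<lambda>t. volt z y (pt_of L e t)) 0 = slope_start y e - slope_start z e"
proof -
  have Le: "L e > 0" using L_pos assms by auto
  note r = rderiv_kinked[OF _ _ volt_edge_kinked[OF assms], of 0]
  show ?thesis
    using r Le on_edge_Inner[OF assms(1), of e] on_edge_Inner[OF assms(2), of e] unfolding slope_start_def sgn_right_def
    by (cases "on_edge y e"; cases "on_edge z e") (auto simp: algebra_simps)
qed

lemma volt_lderiv_end:
  assumes "y \<in> points V E L" "z \<in> points V E L" "e \<in> E"
  shows "lderiv (\<lambda>t. volt z y (pt_of L e t)) (L e) = slope_end y e - slope_end z e"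
proof -
  have Le: "L e > 0" using L_pos assms by auto
  note r = lderiv_kinked[OF _ _ volt_edge_kinked[OF assms], of "L e"]
  show ?thesis
    using r Le on_edge_Inner[OF assms(1), of e] on_edge_Inner[OF assms(2), of e] unfolding slope_end_def sgn_left_def
    by (cases "on_edge y e"; cases "on_edge z e") (auto simp: algebra_simps)
qed

lemma volt_slope_jump:
  assumes "y \<in> points V E L" "z \<in> points V E L" "e \<in> E" "0 < t" "t < L e"
  shows "rderiv (\<lambda>s. volt z y (pt_of L e s)) t - lderiv (\<lambda>s. volt z y (pt_of L e s)) t
     = (if z = Inner e t then 1 else 0) - (if y = Inner e t then 1 else 0)"
proof -
  note r = rderiv_kinked[OF _ _ volt_edge_kinked[OF assms(1-3)], of t]
  note l = lderiv_kinked[OF _ _ volt_edge_kinked[OF assms(1-3)], of t]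
  show ?thesis using r l assms
    using on_edge_Inner[OF assms(1), of e] on_edge_Inner[OF assms(2), of e] unfolding sgn_left_def sgn_right_def
    by (cases y; cases z) (auto split: if_splits)
qed

lemma PL_on_volt:
  assumes "y \<in> points V E L" "z \<in> points V E L" "e \<in> E"
  shows "PL_on (L e) (\<lambda>t. volt z y (pt_of L e t))"
  by (rule PL_on_kinked[OF volt_edge_kinked[OF assms]])

lemma lap_dgreen_at_Inner:
  assumes "e \<in> E" "v \<in> V"
  shows "lap (dgreen_at (Inner e s)) v = (if v = root then 1 else 0)
    - (1 - s / L e) * (if v = fst e then 1 else 0) - s / L e * (if v = snd e then 1 else 0)"
proof -
  have interp: "dgreen_at (Inner e s) = (\<lambda>w. (1 - s / L e) * dgreen (fst e) w + s / L e * dgreen (snd e) w + 0)"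
    by (simp add: fun_eq_iff)
  show ?thesis
    unfolding interp lap_affine dgreen_lap[OF fst_in_V[OF assms(1)] assms(2)] dgreen_lap[OF snd_in_V[OF assms(1)] assms(2)]
    by (simp add: algebra_simps)
qed

lemma sum_if_on_edge:
  "finite S \<Longrightarrow> (\<Sum>e\<in>S. if on_edge x e then f e else 0) = (case x of Vert _ \<Rightarrow> 0 | Inner e _ \<Rightarrow> if e \<in> S then f e else 0)"
  by (cases x) (simp_all add: sum.delta')

lemma slope_sum_Vert:
  assumes x: "x \<in> points V E L" and v: "v \<in> V"
  shows "(\<Sum>e\<in>{e\<in>E. fst e = v}. slope_start x e) + (\<Sum>e\<in>{e\<in>E. snd e = v}. - slope_end x e)
     = (if v = root then 1 else 0) - (if x = Vert v then 1 else 0)"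
proof -
  have "(\<Sum>e\<in>{e\<in>E. fst e = v}. slope_start x e) = (\<Sum>e\<in>{e\<in>E. fst e = v}. (dgreen_at x (snd e) - dgreen_at x (fst e)) / L e)
      + (\<Sum>e\<in>{e\<in>E. fst e = v}. if on_edge x e then 1 - coord x / L e else 0)"
    unfolding slope_start_def sum.distrib ..
  moreover have "(\<Sum>e\<in>{e\<in>E. snd e = v}. - slope_end x e) = (\<Sum>e\<in>{e\<in>E. snd e = v}. (dgreen_at x (fst e) - dgreen_at x (snd e)) / L e)
      + (\<Sum>e\<in>{e\<in>E. snd e = v}. if on_edge x e then coord x / L e else 0)"
    unfolding slope_end_def sum.distrib[symmetric] by (rule sum.cong) (auto simp: diff_divide_distrib)
  ultimately have "(\<Sum>e\<in>{e\<in>E. fst e = v}. slope_start x e) + (\<Sum>e\<in>{e\<in>E. snd e = v}. - slope_end x e)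
      = lap (dgreen_at x) v + (\<Sum>e\<in>{e\<in>E. fst e = v}. if on_edge x e then 1 - coord x / L e else 0)
        + (\<Sum>e\<in>{e\<in>E. snd e = v}. if on_edge x e then coord x / L e else 0)"
    unfolding lap_edge_form by simp
  also have "\<dots> = (if v = root then 1 else 0) - (if x = Vert v then 1 else 0)"
  proof (cases x)
    case (Vert u)
    moreover have "dgreen_at (Vert u) = dgreen u" by (simp add: fun_eq_iff)
    ultimately show ?thesis
      unfolding sum_if_on_edge[OF finite_out_edges] sum_if_on_edge[OF finite_in_edges]
      using dgreen_lap[OF _ v, of u] x by simp
  next
    case (Inner e s)
    then show ?thesis
      unfolding sum_if_on_edge[OF finite_out_edges] sum_if_on_edge[OF finite_in_edges]
      using lap_dgreen_at_Inner[OF _ v, of e s] x by (auto simp: algebra_simps)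
  qed
  finally show ?thesis .
qed

lemma volt_out_slopes_Vert:
  assumes y: "y \<in> points V E L" and z: "z \<in> points V E L" and v: "v \<in> V"
  shows "- out_slopes E L (volt z y) (Vert v) = (if Vert v = y then 1 else 0) - (if Vert v = z then 1 else 0)"
proof -
  have "out_slopes E L (volt z y) (Vert v) = (\<Sum>e\<in>{e\<in>E. fst e = v}. slope_start y e - slope_start z e) + (\<Sum>e\<in>{e\<in>E. snd e = v}. - (slope_end y e - slope_end z e))"
    unfolding out_slopes_def using volt_rderiv_start[OF y z] volt_lderiv_end[OF y z] by (auto intro!: sum.cong arg_cong2[where f="(+)"])
  also have "\<dots> = ((\<Sum>e\<in>{e\<in>E. fst e = v}. slope_start y e) + (\<Sum>e\<in>{e\<in>E. snd e = v}. - slope_end y e))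
     - ((\<Sum>e\<in>{e\<in>E. fst e = v}. slope_start z e) + (\<Sum>e\<in>{e\<in>E. snd e = v}. - slope_end z e))"
    by (simp add: sum_subtractf sum_negf)
  finally show ?thesis unfolding slope_sum_Vert[OF y v] slope_sum_Vert[OF z v] by auto
qed

lemma volt_is_voltage:
  assumes y: "y \<in> points V E L" and z: "z \<in> points V E L"
  shows "is_voltage V E L z y (volt z y)"
  unfolding is_voltage_def
proof (intro conjI ballI allI impI)
  fix x assume "x \<notin> points V E L" then show "volt z y x = 0" unfolding volt_def by simp
next
  fix e assume "e \<in> E" then show "PL_on (L e) (\<lambda>t. volt z y (pt_of L e t))" using PL_on_volt[OF y z] by simp
next
  fix x assume x: "x \<in> points V E L"
  show "- out_slopes E L (volt z y) x = (if x = y then 1 else 0) - (if x = z then 1 else 0)"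
  proof (cases x)
    case (Vert v)
    then show ?thesis using volt_out_slopes_Vert[OF y z, of v] x by auto
  next
    case (Inner e t)
    then have et: "e \<in> E" "0 < t" "t < L e" using x by auto
    show ?thesis unfolding Inner out_slopes_def using volt_slope_jump[OF y z et] by auto
  qed
next
  show "volt z y z = 0" unfolding volt_def using z by simp
qed

end

section \<open>Uniqueness of the voltage function\<close>

context mgraph
begin

lemma out_slopes_diff:
  assumes f: "\<forall>e\<in>E. PL_on (L e) (\<lambda>t. f (pt_of L e t))" and g: "\<forall>e\<in>E. PL_on (L e) (\<lambda>t. g (pt_of L e t))"
    and x: "x \<in> points V E L"
  shows "out_slopes E L (\<lambda>x. f x - g x) x = out_slopes E L f x - out_slopes E L g x"
proof (cases x)
  case (Vert v)
  have r: "rderiv (\<lambda>t. f (pt_of L e t) - g (pt_of L e t)) 0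
      = rderiv (\<lambda>t. f (pt_of L e t)) 0 - rderiv (\<lambda>t. g (pt_of L e t)) 0" if "e \<in> E" for e
    by (rule rderiv_diff[OF f[rule_format, OF that] g[rule_format, OF that] order_refl L_pos[OF that]])
  have l: "lderiv (\<lambda>t. f (pt_of L e t) - g (pt_of L e t)) (L e)
      = lderiv (\<lambda>t. f (pt_of L e t)) (L e) - lderiv (\<lambda>t. g (pt_of L e t)) (L e)" if "e \<in> E" for e
    by (rule lderiv_diff[OF f[rule_format, OF that] g[rule_format, OF that] L_pos[OF that] order_refl])
  have "out_slopes E L (\<lambda>x. f x - g x) x
      = (\<Sum>e\<in>{e\<in>E. fst e = v}. rderiv (\<lambda>t. f (pt_of L e t)) 0 - rderiv (\<lambda>t. g (pt_of L e t)) 0)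
      + (\<Sum>e\<in>{e\<in>E. snd e = v}. - (lderiv (\<lambda>t. f (pt_of L e t)) (L e) - lderiv (\<lambda>t. g (pt_of L e t)) (L e)))"
    unfolding Vert out_slopes_def using r l by (auto intro!: sum.cong arg_cong2[where f="(+)"])
  then show ?thesis unfolding Vert out_slopes_def by (simp add: sum_subtractf sum_negf)
next
  case (Inner e t)
  then have e: "e \<in> E" and t: "0 < t" "t < L e" using x by auto
  show ?thesis unfolding Inner out_slopes_def
    using rderiv_diff[OF f[rule_format, OF e] g[rule_format, OF e] less_imp_le[OF t(1)] t(2)]
      lderiv_diff[OF f[rule_format, OF e] g[rule_format, OF e] t(1) less_imp_le[OF t(2)]]
    by simp
qed

lemma harmonic_affine_on_edge:
  assumes e: "e \<in> E" and h: "PL_on (L e) (\<lambda>t. h (pt_of L e t))"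
    and harm: "\<forall>t\<in>{0<..<L e}. out_slopes E L h (Inner e t) = 0"
  defines "m \<equiv> (h (Vert (snd e)) - h (Vert (fst e))) / L e"
  shows "\<forall>t\<in>{0..L e}. h (pt_of L e t) = h (Vert (fst e)) + m * t"
    and "rderiv (\<lambda>t. h (pt_of L e t)) 0 = m"
    and "lderiv (\<lambda>t. h (pt_of L e t)) (L e) = m"
proof -
  have Le: "L e > 0" using L_pos[OF e] .
  have "\<forall>t\<in>{0<..<L e}. rderiv (\<lambda>t. h (pt_of L e t)) t = lderiv (\<lambda>t. h (pt_of L e t)) t"
    using harm unfolding out_slopes_def by simp
  then obtain a c where ac: "\<forall>t\<in>{0..L e}. h (pt_of L e t) = a * t + c"
    by (rule PL_on_affine_if_no_kinks[OF h Le])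
  have c: "c = h (Vert (fst e))" using ac[rule_format, of 0] Le by (simp add: pt_of_def)
  have a: "a = m" using ac[rule_format, of "L e"] Le c by (simp add: pt_of_def m_def field_simps)
  show "\<forall>t\<in>{0..L e}. h (pt_of L e t) = h (Vert (fst e)) + m * t" using ac a c by auto
  show "rderiv (\<lambda>t. h (pt_of L e t)) 0 = m"
    by (rule rderiv_affine(2)[of "L e" _ _ _ c]) (use Le ac a in auto)
  show "lderiv (\<lambda>t. h (pt_of L e t)) (L e) = m"
    by (rule lderiv_affine(2)[of "L e" _ _ _ c]) (use Le ac a in auto)
qed

lemma harmonic_out_slopes_Vert:
  assumes PL: "\<forall>e\<in>E. PL_on (L e) (\<lambda>t. h (pt_of L e t))"
    and harm: "\<forall>e\<in>E. \<forall>t\<in>{0<..<L e}. out_slopes E L h (Inner e t) = 0"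
  shows "out_slopes E L h (Vert v) = lap (\<lambda>u. h (Vert u)) v"
proof -
  have "rderiv (\<lambda>t. h (pt_of L e t)) 0 = (h (Vert (snd e)) - h (Vert (fst e))) / L e"
    and "- lderiv (\<lambda>t. h (pt_of L e t)) (L e) = (h (Vert (fst e)) - h (Vert (snd e))) / L e" if "e \<in> E" for e
    using harmonic_affine_on_edge(2,3)[OF that PL[rule_format, OF that] bspec[OF harm that]]
    by (simp_all add: minus_divide_left)
  then show ?thesis unfolding out_slopes_def lap_edge_form
    by (auto intro!: arg_cong2[where f="(+)"] sum.cong)
qed

text \<open>A function without sources or sinks is constant: it is affine on every edge,
  and by the maximum principle its vertex values agree.\<close>

lemma harmonic_eq_0:
  assumes PL: "\<forall>e\<in>E. PL_on (L e) (\<lambda>t. h (pt_of L e t))"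
    and harm: "\<forall>x\<in>points V E L. out_slopes E L h x = 0"
    and z: "z \<in> points V E L" "h z = 0" and x: "x \<in> points V E L"
  shows "h x = 0"
proof -
  have harm_Inner: "\<forall>e\<in>E. \<forall>t\<in>{0<..<L e}. out_slopes E L h (Inner e t) = 0"
    using harm by simp
  have "\<forall>v\<in>V. lap (\<lambda>u. h (Vert u)) v = 0"
  proof
    fix v assume "v \<in> V"
    then show "lap (\<lambda>u. h (Vert u)) v = 0"
      using bspec[OF harm, of "Vert v"] harmonic_out_slopes_Vert[OF PL harm_Inner, of v] by simp
  qed
  from lap_zero_const[OF this _ root_in_V]
  have const: "h (Vert u) = h (Vert root)" if "u \<in> V" for u
    using that by simp
  have on_points: "h y = h (Vert root)" if y: "y \<in> points V E L" for y
  proof -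
    from y consider (Vert) u where "u \<in> V" "y = Vert u"
      | (Inner) e s where "e \<in> E" "0 < s" "s < L e" "y = Inner e s"
      unfolding points_iff by blast
    then show ?thesis
    proof cases
      case Vert
      then show ?thesis using const by simp
    next
      case Inner
      have "h (pt_of L e s) = h (Vert (fst e)) + (h (Vert (snd e)) - h (Vert (fst e))) / L e * s"
        using harmonic_affine_on_edge(1)[OF Inner(1) PL[rule_format, OF Inner(1)] bspec[OF harm_Inner Inner(1)]]
          Inner by auto
      moreover have "pt_of L e s = y" using Inner by (simp add: pt_of_def)
      ultimately show ?thesis using const[OF fst_in_V[OF Inner(1)]] const[OF snd_in_V[OF Inner(1)]] by simp
    qed
  qed
  show ?thesis using on_points[OF x] on_points[OF z(1)] z(2) by simp
qed

lemma voltage_unique: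
  assumes z: "z \<in> points V E L" and f: "is_voltage V E L z y f" and g: "is_voltage V E L z y g"
  shows "f = g"
proof
  fix x
  have f0: "\<forall>x. x \<notin> points V E L \<longrightarrow> f x = 0" and fPL: "\<forall>e\<in>E. PL_on (L e) (\<lambda>t. f (pt_of L e t))"
    and fL: "\<forall>x\<in>points V E L. - out_slopes E L f x = (if x = y then 1 else 0) - (if x = z then 1 else 0)"
    and fz: "f z = 0" using f unfolding is_voltage_def by auto
  have g0: "\<forall>x. x \<notin> points V E L \<longrightarrow> g x = 0" and gPL: "\<forall>e\<in>E. PL_on (L e) (\<lambda>t. g (pt_of L e t))"
    and gL: "\<forall>x\<in>points V E L. - out_slopes E L g x = (if x = y then 1 else 0) - (if x = z then 1 else 0)"
    and gz: "g z = 0" using g unfolding is_voltage_def by auto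
  have PL: "\<forall>e\<in>E. PL_on (L e) (\<lambda>t. f (pt_of L e t) - g (pt_of L e t))"
    using fPL gPL PL_on_diff by blast
  have harm: "\<forall>x\<in>points V E L. out_slopes E L (\<lambda>x. f x - g x) x = 0"
  proof
    fix x assume x: "x \<in> points V E L"
    have "out_slopes E L f x = out_slopes E L g x" using fL gL x by (metis neg_equal_iff_equal)
    then show "out_slopes E L (\<lambda>x. f x - g x) x = 0" using out_slopes_diff[OF fPL gPL x] by simp
  qed
  show "f x = g x"
  proof (cases "x \<in> points V E L")
    case True
    from harmonic_eq_0[OF PL harm z _ True] fz gz show ?thesis by simp
  next
    case False
    then show ?thesis using f0 g0 by simp
  qed
qed

lemma jv_eq_volt:
  assumes "z \<in> points V E L" "y \<in> points V E L"
  shows "jv V E L z x y = volt z y x"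
proof -
  have "(THE f. is_voltage V E L z y f) = volt z y"
  proof (rule the_equality)
    show "is_voltage V E L z y (volt z y)" by (rule volt_is_voltage[OF assms(2,1)])
    fix f assume "is_voltage V E L z y f"
    then show "f = volt z y" by (rule voltage_unique[OF assms(1) _ volt_is_voltage[OF assms(2,1)]])
  qed
  then show ?thesis unfolding jv_def by simp
qed


lemma jroot_sym:
  assumes a: "a \<in> points V E L" and b: "b \<in> points V E L"
  shows "jroot a b = jroot b a"
proof -
  have VI: "jroot (Vert u) (Inner e t) = jroot (Inner e t) (Vert u)" if "u \<in> V" "e \<in> E" "0 < t" "t < L e" for u e t
  proof -
    have "L e > 0" using L_pos that by auto
    then show ?thesis using that dgreen_sym[OF that(1) fst_in_V[OF that(2)]] dgreen_sym[OF that(1) snd_in_V[OF that(2)]]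
      by (simp add: jroot_edge_def tent_at_def tent_def field_simps)
  qed
  have II: "jroot (Inner e s) (Inner e' t) = jroot (Inner e' t) (Inner e s)"
    if "e \<in> E" "0 < s" "s < L e" "e' \<in> E" "0 < t" "t < L e'" for e s e' t
  proof -
    have "L e > 0" "L e' > 0" using L_pos that by auto
    then show ?thesis using that
        dgreen_sym[OF fst_in_V[OF that(1)] fst_in_V[OF that(4)]] dgreen_sym[OF fst_in_V[OF that(1)] snd_in_V[OF that(4)]]
        dgreen_sym[OF snd_in_V[OF that(1)] fst_in_V[OF that(4)]] dgreen_sym[OF snd_in_V[OF that(1)] snd_in_V[OF that(4)]]
      by (simp add: jroot_edge_def tent_at_def tent_def field_simps abs_minus_commute)
  qed
  from a consider (V) u where "u \<in> V" "a = Vert u" | (I) e s where "e \<in> E" "0 < s" "s < L e" "a = Inner e s"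
    unfolding points_iff by blast
  then show ?thesis
  proof cases
    case V
    from b consider (V2) v where "v \<in> V" "b = Vert v" | (I2) e t where "e \<in> E" "0 < t" "t < L e" "b = Inner e t"
      unfolding points_iff by blast
    then show ?thesis
    proof cases
      case V2 then show ?thesis using V dgreen_sym by simp
    next
      case I2 then show ?thesis using V VI by simp
    qed
  next
    case I
    from b consider (V2) v where "v \<in> V" "b = Vert v" | (I2) e' t where "e' \<in> E" "0 < t" "t < L e'" "b = Inner e' t"
      unfolding points_iff by blast
    then show ?thesis
    proof cases
      case V2 then show ?thesis using I VI[of v e s] by simp
    next
      case I2 then show ?thesis using I II by simp
    qed
  qed
qed

lemma res_eq_jroot:
  assumes "x \<in> points V E L" "y \<in> points V E L"
  shows "res V E L x y = jroot x x + jroot y y - 2 * jroot x y"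
  unfolding res_def jv_eq_volt[OF assms(2) assms(1)] volt_def using assms jroot_sym[OF assms] by simp

lemma jv_eq_res:
  assumes "z \<in> points V E L" "x \<in> points V E L" "y \<in> points V E L"
  shows "jv V E L z x y = (res V E L z x + res V E L z y - res V E L x y) / 2"
  unfolding jv_eq_volt[OF assms(1) assms(3)] volt_def res_eq_jroot[OF assms(1,2)] res_eq_jroot[OF assms(1,3)] res_eq_jroot[OF assms(2,3)]
  using assms jroot_sym[OF assms(1) assms(2)] jroot_sym[OF assms(1) assms(3)] jroot_sym[OF assms(2) assms(3)] by (simp add: field_simps)

lemma res_sym:
  assumes "x \<in> points V E L" "y \<in> points V E L"
  shows "res V E L x y = res V E L y x"
  using res_eq_jroot[OF assms] res_eq_jroot[OF assms(2,1)] jroot_sym[OF assms] by simp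

lemma dgreen_at_pt_of:
  assumes "e \<in> E" "0 \<le> s" "s \<le> L e"
  shows "dgreen_at (pt_of L e s) u = (1 - s / L e) * dgreen (fst e) u + (s / L e) * dgreen (snd e) u"
  using assms L_pos[OF assms(1)] unfolding pt_of_def by auto

lemma tent_at_pt_of:
  assumes "e \<in> E" "0 \<le> s" "s \<le> L e" "0 \<le> t" "t \<le> L e'"
  shows "tent_at (pt_of L e s) e' t = (if e = e' then tent (L e) s t else 0)"
  using assms L_pos[OF assms(1)] unfolding pt_of_def tent_at_def tent_def by (auto simp: field_simps)

lemma jroot_pt_of_pt_of:
  assumes "e \<in> E" "0 \<le> s" "s \<le> L e" "e' \<in> E" "0 \<le> t" "t \<le> L e'"
  shows "jroot (pt_of L e s) (pt_of L e' t) =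
    (1 - t / L e') * ((1 - s / L e) * dgreen (fst e) (fst e') + (s / L e) * dgreen (snd e) (fst e'))
    + (t / L e') * ((1 - s / L e) * dgreen (fst e) (snd e') + (s / L e) * dgreen (snd e) (snd e'))
    + (if e = e' then tent (L e) s t else 0)" (is "_ = ?R")
proof -
  have "jroot (pt_of L e s) (pt_of L e' t) = jroot_edge (pt_of L e s) e' t"
    by (rule jroot_pt_of[OF pt_of_in_points[OF assms(1-3)] assms(4-6)])
  also have "\<dots> = ?R"
    unfolding jroot_edge_def dgreen_at_pt_of[OF assms(1-3)] tent_at_pt_of[OF assms(1-3) assms(5,6)]
    using L_pos[OF assms(4)] L_pos[OF assms(1)] by (simp add: field_simps)
  finally show ?thesis .
qed

end

section \<open>Integration over the metrized graph\<close>

context mgraph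
begin

definition continuous_on_edges :: "('v mpt \<Rightarrow> real) \<Rightarrow> bool" where
  "continuous_on_edges F \<longleftrightarrow> (\<forall>e\<in>E. continuous_on {0..L e} (\<lambda>t. F (pt_of L e t)))"

lemma integ_cong:
  assumes "\<forall>z\<in>points V E L. F z = G z"
  shows "integ V E L \<mu> F = integ V E L \<mu> G"
proof -
  have 1: "(\<Sum>v\<in>V. fst \<mu> v * F (Vert v)) = (\<Sum>v\<in>V. fst \<mu> v * G (Vert v))"
    using assms by (intro sum.cong) auto
  have 2: "(\<Sum>e\<in>E. integral {0..L e} (\<lambda>t. snd \<mu> e t * F (pt_of L e t))) = (\<Sum>e\<in>E. integral {0..L e} (\<lambda>t. snd \<mu> e t * G (pt_of L e t)))"
    using assms pt_of_in_points by (intro sum.cong integral_cong) auto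
  show ?thesis unfolding integ_def 1 2 ..
qed

lemma integ_lincomb:
  assumes gm: "is_gmeas V E L \<mu>" and cF: "continuous_on_edges F" and cG: "continuous_on_edges G" and cH: "continuous_on_edges H"
  shows "integ V E L \<mu> (\<lambda>z. a * F z + b * G z + c * H z) = a * integ V E L \<mu> F + b * integ V E L \<mu> G + c * integ V E L \<mu> H"
proof -
  have ii: "(\<lambda>t. snd \<mu> e t * K (pt_of L e t)) integrable_on {0..L e}" if "e \<in> E" "continuous_on_edges K" for e K
    using integrable_mult_continuous[where f="snd \<mu> e" and a=0 and b="L e" and g="\<lambda>t. K (pt_of L e t)"] gm that
    unfolding is_gmeas_def continuous_on_edges_def by auto
  have e: "integral {0..L e} (\<lambda>t. snd \<mu> e t * (a * F (pt_of L e t) + b * G (pt_of L e t) + c * H (pt_of L e t)))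
     = a * integral {0..L e} (\<lambda>t. snd \<mu> e t * F (pt_of L e t)) + b * integral {0..L e} (\<lambda>t. snd \<mu> e t * G (pt_of L e t))
       + c * integral {0..L e} (\<lambda>t. snd \<mu> e t * H (pt_of L e t))" if "e \<in> E" for e
  proof -
    have "integral {0..L e} (\<lambda>t. snd \<mu> e t * (a * F (pt_of L e t) + b * G (pt_of L e t) + c * H (pt_of L e t)))
      = integral {0..L e} (\<lambda>t. a * (snd \<mu> e t * F (pt_of L e t)) + b * (snd \<mu> e t * G (pt_of L e t)) + c * (snd \<mu> e t * H (pt_of L e t)))"
      by (simp add: algebra_simps)
    also have "\<dots> = integral {0..L e} (\<lambda>t. a * (snd \<mu> e t * F (pt_of L e t)) + b * (snd \<mu> e t * G (pt_of L e t)))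
        + integral {0..L e} (\<lambda>t. c * (snd \<mu> e t * H (pt_of L e t)))"
      by (rule integral_add) (use ii[OF that cF] ii[OF that cG] ii[OF that cH] in \<open>auto intro!: integrable_add integrable_cmul[where 'b=real, simplified]\<close>)
    also have "\<dots> = integral {0..L e} (\<lambda>t. a * (snd \<mu> e t * F (pt_of L e t))) + integral {0..L e} (\<lambda>t. b * (snd \<mu> e t * G (pt_of L e t)))
        + integral {0..L e} (\<lambda>t. c * (snd \<mu> e t * H (pt_of L e t)))"
      by (subst integral_add) (use ii[OF that cF] ii[OF that cG] in \<open>auto intro!: integrable_cmul[where 'b=real, simplified]\<close>)
    finally show ?thesis by simp
  qed
  show ?thesis unfolding integ_def using e
    by (simp add: sum.distrib sum_distrib_left algebra_simps)
qed

lemma continuous_on_edges_const: "continuous_on_edges (\<lambda>_. c)" unfolding continuous_on_edges_def by simp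

lemma continuous_on_edges_jroot:
  assumes "x \<in> points V E L"
  shows "continuous_on_edges (jroot x)"
  unfolding continuous_on_edges_def
proof
  fix e assume e: "e \<in> E"
  have "L e \<noteq> 0" using L_pos[OF e] by simp
  then have "continuous_on {0..L e} (\<lambda>t. jroot_edge x e t)"
    unfolding jroot_edge_def tent_at_def tent_def by (cases "on_edge x e") (auto intro!: continuous_intros)
  then show "continuous_on {0..L e} (\<lambda>t. jroot x (pt_of L e t))"
    by (rule continuous_on_eq) (use jroot_pt_of[OF assms e] in auto)
qed

lemma continuous_on_edges_jroot_diag: "continuous_on_edges (\<lambda>z. jroot z z)"
  unfolding continuous_on_edges_def
proof
  fix e assume e: "e \<in> E"
  have "continuous_on {0..L e} (\<lambda>t.
    (1 - t / L e) * ((1 - t / L e) * dgreen (fst e) (fst e) + (t / L e) * dgreen (snd e) (fst e))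
    + (t / L e) * ((1 - t / L e) * dgreen (fst e) (snd e) + (t / L e) * dgreen (snd e) (snd e))
    + (if e = e then tent (L e) t t else 0))"
    unfolding tent_def using L_pos[OF e] by (auto intro!: continuous_intros)
  then show "continuous_on {0..L e} (\<lambda>t. jroot (pt_of L e t) (pt_of L e t))"
    by (rule continuous_on_eq) (use jroot_pt_of_pt_of[OF e _ _ e] in auto)
qed

lemma continuous_on_edges_res:
  assumes "x \<in> points V E L"
  shows "continuous_on_edges (\<lambda>z. res V E L z x)"
proof -
  have "continuous_on_edges (\<lambda>z. 1 * jroot z z + (-2) * jroot x z + jroot x x * 1)"
    using continuous_on_edges_jroot_diag continuous_on_edges_jroot[OF assms] unfolding continuous_on_edges_def by (auto intro!: continuous_intros)
  moreover have "res V E L (pt_of L e t) x = 1 * jroot (pt_of L e t) (pt_of L e t) + (-2) * jroot x (pt_of L e t) + jroot x x * 1"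
    if "e \<in> E" "t \<in> {0..L e}" for e t
    using res_eq_jroot[OF pt_of_in_points[of e t] assms] jroot_sym[OF assms pt_of_in_points[of e t]] that by auto
  ultimately show ?thesis unfolding continuous_on_edges_def
    by (metis (no_types, lifting) continuous_on_cong)
qed

end

section \<open>The canonical measure\<close>

context mgraph
begin

text \<open>On the edge \<open>e\<close>, \<open>jroot x x = r(x, root)\<close> is the quadratic \<open>2 * diag_quad e\<close>.\<close>

definition diag_c0 :: "'v \<times> 'v \<Rightarrow> real" where
  "diag_c0 e = dgreen (fst e) (fst e) / 2"
definition diag_c1 :: "'v \<times> 'v \<Rightarrow> real" where
  "diag_c1 e = ((2 * dgreen (fst e) (snd e) - 2 * dgreen (fst e) (fst e)) / L e + 1) / 2"
definition diag_c2 :: "'v \<times> 'v \<Rightarrow> real" where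
  "diag_c2 e = ((dgreen (fst e) (fst e) - 2 * dgreen (fst e) (snd e) + dgreen (snd e) (snd e)) / (L e)\<^sup>2 - 1 / L e) / 2"
definition diag_quad :: "'v \<times> 'v \<Rightarrow> real \<Rightarrow> real" where
  "diag_quad e t = diag_c0 e + diag_c1 e * t + diag_c2 e * t\<^sup>2"

lemma jroot_pt_of_diag:
  assumes "e \<in> E" "0 \<le> t" "t \<le> L e"
  shows "jroot (pt_of L e t) (pt_of L e t) = 2 * diag_quad e t"
proof -
  have Le: "L e > 0" using L_pos assms by auto
  have s: "dgreen (snd e) (fst e) = dgreen (fst e) (snd e)" using dgreen_sym fst_in_V snd_in_V assms by metis
  have tt: "tent (L e) t t = t - t\<^sup>2 / L e" unfolding tent_def using Le by (simp add: power2_eq_square field_simps)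
  show ?thesis unfolding jroot_pt_of_pt_of[OF assms assms] diag_quad_def diag_c0_def diag_c1_def diag_c2_def s if_True tt
    using Le by (simp add: power2_eq_square field_simps)
qed

lemma diag_quad_L: "e \<in> E \<Longrightarrow> diag_quad e (L e) = dgreen (snd e) (snd e) / 2"
  using L_pos[of e] unfolding diag_quad_def diag_c0_def diag_c1_def diag_c2_def by (simp add: power2_eq_square field_simps)

text \<open>The measure \<open>\<delta>\<^sub>r\<^sub>o\<^sub>o\<^sub>t + \<Delta>(r(\<cdot>, root) / 2)\<close> of Chinburg and Rumely: its density \<open>- 2 * diag_c2 e\<close> is
  \<open>1 / L - r(p, q) / L\<^sup>2\<close>, and its vertex masses collect the outgoing slopes of the \<open>diag_quad e\<close>.\<close>

definition vertex_mass :: "'v \<Rightarrow> real" where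
  "vertex_mass v = (if v \<in> V then (if v = root then 1 else 0) - ((\<Sum>e\<in>{e\<in>E. fst e = v}. diag_c1 e) - (\<Sum>e\<in>{e\<in>E. snd e = v}. diag_c1 e + 2 * diag_c2 e * L e)) else 0)"

definition mu_expl :: "'v gmeas" where "mu_expl = (vertex_mass, \<lambda>e t. - 2 * diag_c2 e)"

lemma mu_expl_gmeas: "is_gmeas V E L mu_expl"
  unfolding is_gmeas_def mu_expl_def vertex_mass_def by (auto intro!: absolutely_integrable_continuous_real continuous_intros)

lemma integ_mu_expl: "integ V E L mu_expl F = (\<Sum>v\<in>V. vertex_mass v * F (Vert v)) + (\<Sum>e\<in>E. (- 2 * diag_c2 e) * integral {0..L e} (\<lambda>t. F (pt_of L e t)))"
  unfolding integ_def mu_expl_def by simp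

lemma sum_vertex_mass: "(\<Sum>v\<in>V. vertex_mass v * h v) = h root - ((\<Sum>e\<in>E. diag_c1 e * h (fst e)) - (\<Sum>e\<in>E. (diag_c1 e + 2 * diag_c2 e * L e) * h (snd e)))"
proof -
  have "(\<Sum>v\<in>V. vertex_mass v * h v) = (\<Sum>v\<in>V. (if v = root then h v else 0)) - ((\<Sum>v\<in>V. \<Sum>e\<in>{e\<in>E. fst e = v}. diag_c1 e * h (fst e)) - (\<Sum>v\<in>V. \<Sum>e\<in>{e\<in>E. snd e = v}. (diag_c1 e + 2 * diag_c2 e * L e) * h (snd e)))"
    unfolding sum_subtractf[symmetric]
  proof (rule sum.cong)
    fix v assume v: "v \<in> V"
    have a: "(\<Sum>e\<in>{e\<in>E. fst e = v}. diag_c1 e * h (fst e)) = (\<Sum>e\<in>{e\<in>E. fst e = v}. diag_c1 e) * h v"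
      unfolding sum_distrib_right by (rule sum.cong) auto
    have b: "(\<Sum>e\<in>{e\<in>E. snd e = v}. (diag_c1 e + 2 * diag_c2 e * L e) * h (snd e)) = (\<Sum>e\<in>{e\<in>E. snd e = v}. diag_c1 e + 2 * diag_c2 e * L e) * h v"
      unfolding sum_distrib_right by (rule sum.cong) auto
    show "vertex_mass v * h v = (if v = root then h v else 0) - ((\<Sum>e\<in>{e\<in>E. fst e = v}. diag_c1 e * h (fst e)) - (\<Sum>e\<in>{e\<in>E. snd e = v}. (diag_c1 e + 2 * diag_c2 e * L e) * h (snd e)))"
      unfolding a b using v by (simp add: vertex_mass_def algebra_simps)
  qed simp
  also have "\<dots> = h root - ((\<Sum>e\<in>E. diag_c1 e * h (fst e)) - (\<Sum>e\<in>E. (diag_c1 e + 2 * diag_c2 e * L e) * h (snd e)))"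
    unfolding sum_group_fst sum_group_snd using root_in_V finite_V by simp
  finally show ?thesis .
qed

lemma mu_expl_mass: "integ V E L mu_expl (\<lambda>_. 1) = 1"
proof -
  have "(\<Sum>v\<in>V. vertex_mass v * 1) = 1 - ((\<Sum>e\<in>E. diag_c1 e * 1) - (\<Sum>e\<in>E. (diag_c1 e + 2 * diag_c2 e * L e) * 1))"
    by (rule sum_vertex_mass)
  moreover have "integral {0..L e} (\<lambda>t. 1::real) = L e" if "e \<in> E" for e
    using L_pos[OF that] by simp
  ultimately have "integ V E L mu_expl (\<lambda>_. 1) = 1 - ((\<Sum>e\<in>E. diag_c1 e) - (\<Sum>e\<in>E. diag_c1 e + 2 * diag_c2 e * L e)) + (\<Sum>e\<in>E. - 2 * diag_c2 e * L e)"
    unfolding integ_mu_expl by simp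
  also have "\<dots> = 1" by (simp add: sum.distrib sum_negf)
  finally show ?thesis .
qed

lemma integral_jroot_edge:
  assumes x: "x \<in> points V E L" and e: "e \<in> E"
  shows "integral {0..L e} (\<lambda>t. jroot x (pt_of L e t)) =
    (dgreen_at x (fst e) + (if on_edge x e then coord x / 2 else 0)) * L e
    + ((dgreen_at x (snd e) - dgreen_at x (fst e)) / L e + (if on_edge x e then 1/2 - coord x / L e else 0)) * (L e)\<^sup>2 / 2
    + (if on_edge x e then - 1/2 else 0) * ((coord x)\<^sup>2 + (L e - coord x)\<^sup>2) / 2" (is "_ = ?R")
proof -
  have "integral {0..L e} (\<lambda>t. jroot x (pt_of L e t)) = integral {0..L e} (\<lambda>t. jroot_edge x e t)"
    by (rule integral_cong) (use jroot_pt_of[OF x e] in auto)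
  also have "\<dots> = ?R"
    unfolding jroot_edge_kinked
    by (rule integral_unique[OF kinked_has_integral]) (use on_edge_Inner[OF x, of e] L_pos[OF e] in auto)
  finally show ?thesis .
qed

lemma dgreen_at_root: "x \<in> points V E L \<Longrightarrow> dgreen_at x root = 0"
  by (cases x) (auto simp: dgreen_root fst_in_V snd_in_V)

lemma edge_integration_by_parts:
  assumes x: "x \<in> points V E L" and e: "e \<in> E"
  shows "- diag_c1 e * dgreen_at x (fst e) + (diag_c1 e + 2 * diag_c2 e * L e) * dgreen_at x (snd e) - 2 * diag_c2 e * integral {0..L e} (\<lambda>t. jroot x (pt_of L e t))
    = (if on_edge x e then diag_quad e (coord x) else 0)
      - (diag_c0 e * slope_start x e - dgreen (snd e) (snd e) / 2 * slope_end x e)"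
proof -
  have Le: "L e > 0" using L_pos e by auto
  define \<alpha> where "\<alpha> = dgreen_at x (fst e) + (if on_edge x e then coord x / 2 else 0)"
  define \<beta> where "\<beta> = (dgreen_at x (snd e) - dgreen_at x (fst e)) / L e + (if on_edge x e then 1/2 - coord x / L e else 0)"
  define g where "g = (if on_edge x e then - 1/2 else (0::real))"
  define s where "s = coord x"
  have I: "integral {0..L e} (\<lambda>t. jroot x (pt_of L e t)) = \<alpha> * L e + \<beta> * (L e)\<^sup>2 / 2 + g * (s\<^sup>2 + (L e - s)\<^sup>2) / 2"
    unfolding integral_jroot_edge[OF x e] \<alpha>_def \<beta>_def g_def s_def ..
  have 1: "\<alpha> + g * s = dgreen_at x (fst e)" unfolding \<alpha>_def g_def s_def by auto
  have 2: "\<alpha> + \<beta> * L e + g * (L e - s) = dgreen_at x (snd e)" unfolding \<alpha>_def \<beta>_def g_def s_def using Le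
    by (cases "on_edge x e") (auto simp: field_simps)
  have 3: "\<beta> - g = slope_start x e" unfolding \<beta>_def g_def slope_start_def by auto
  have 4: "\<beta> + g = slope_end x e" unfolding \<beta>_def g_def slope_end_def by auto
  have 5: "diag_c0 e + diag_c1 e * L e + diag_c2 e * (L e)\<^sup>2 = dgreen (snd e) (snd e) / 2" using diag_quad_L[OF e] unfolding diag_quad_def .
  have 6: "2 * g * (diag_c0 e + diag_c1 e * s + diag_c2 e * s\<^sup>2) = - (if on_edge x e then diag_quad e (coord x) else 0)"
    unfolding g_def s_def diag_quad_def by auto
  have "- diag_c1 e * dgreen_at x (fst e) + (diag_c1 e + 2 * diag_c2 e * L e) * dgreen_at x (snd e) - 2 * diag_c2 e * integral {0..L e} (\<lambda>t. jroot x (pt_of L e t))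
    = - diag_c1 e * (\<alpha> + g * s) + (diag_c1 e + 2 * diag_c2 e * L e) * (\<alpha> + \<beta> * L e + g * (L e - s))
     - 2 * diag_c2 e * (\<alpha> * L e + \<beta> * (L e)\<^sup>2 / 2 + g * (s\<^sup>2 + (L e - s)\<^sup>2) / 2)"
    by (simp only: I 1 2)
  also have "\<dots> = - diag_c0 e * (\<beta> - g) + (diag_c0 e + diag_c1 e * L e + diag_c2 e * (L e)\<^sup>2) * (\<beta> + g) - 2 * g * (diag_c0 e + diag_c1 e * s + diag_c2 e * s\<^sup>2)"
    by (simp add: power2_eq_square field_simps)
  also have "\<dots> = - diag_c0 e * slope_start x e + (dgreen (snd e) (snd e) / 2) * slope_end x e + (if on_edge x e then diag_quad e (coord x) else 0)"
    by (simp only: 3 4 5 6)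
  finally show ?thesis by simp
qed

lemma integ_mu_expl_jroot_edges:
  assumes x: "x \<in> points V E L"
  shows "integ V E L mu_expl (jroot x) = (\<Sum>e\<in>E. if on_edge x e then diag_quad e (coord x) else 0)
    - (\<Sum>e\<in>E. diag_c0 e * slope_start x e - dgreen (snd e) (snd e) / 2 * slope_end x e)"
proof -
  have vert: "(\<Sum>v\<in>V. vertex_mass v * jroot x (Vert v)) = (\<Sum>v\<in>V. vertex_mass v * dgreen_at x v)"
    by (rule sum.cong) auto
  have "integ V E L mu_expl (jroot x) = (\<Sum>v\<in>V. vertex_mass v * dgreen_at x v)
      + (\<Sum>e\<in>E. (- 2 * diag_c2 e) * integral {0..L e} (\<lambda>t. jroot x (pt_of L e t)))"
    unfolding integ_mu_expl vert ..
  also have "\<dots> = (\<Sum>e\<in>E. - diag_c1 e * dgreen_at x (fst e) + (diag_c1 e + 2 * diag_c2 e * L e) * dgreen_at x (snd e)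
      - 2 * diag_c2 e * integral {0..L e} (\<lambda>t. jroot x (pt_of L e t)))"
    unfolding sum_vertex_mass dgreen_at_root[OF x] by (simp add: sum.distrib sum_subtractf sum_negf algebra_simps)
  also have "\<dots> = (\<Sum>e\<in>E. (if on_edge x e then diag_quad e (coord x) else 0)
      - (diag_c0 e * slope_start x e - dgreen (snd e) (snd e) / 2 * slope_end x e))"
    by (rule sum.cong[OF refl], rule edge_integration_by_parts[OF x])
  finally show ?thesis by (simp only: sum_subtractf)
qed

lemma sum_slope_terms:
  assumes x: "x \<in> points V E L"
  shows "(\<Sum>e\<in>E. diag_c0 e * slope_start x e - dgreen (snd e) (snd e) / 2 * slope_end x e)
    = - (case x of Vert u \<Rightarrow> dgreen u u / 2 | Inner _ _ \<Rightarrow> 0)"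
proof -
  have "(\<Sum>e\<in>E. diag_c0 e * slope_start x e - dgreen (snd e) (snd e) / 2 * slope_end x e)
      = (\<Sum>e\<in>E. dgreen (fst e) (fst e) / 2 * slope_start x e) - (\<Sum>e\<in>E. dgreen (snd e) (snd e) / 2 * slope_end x e)"
    unfolding diag_c0_def by (rule sum_subtractf)
  also have "\<dots> = (\<Sum>v\<in>V. dgreen v v / 2 * (\<Sum>e\<in>{e\<in>E. fst e = v}. slope_start x e))
      - (\<Sum>v\<in>V. dgreen v v / 2 * (\<Sum>e\<in>{e\<in>E. snd e = v}. slope_end x e))"
    unfolding sum_fst_mult[where h="\<lambda>v. dgreen v v / 2"] sum_snd_mult[where h="\<lambda>v. dgreen v v / 2"] ..
  also have "\<dots> = (\<Sum>v\<in>V. dgreen v v / 2 * ((\<Sum>e\<in>{e\<in>E. fst e = v}. slope_start x e) + (\<Sum>e\<in>{e\<in>E. snd e = v}. - slope_end x e)))"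
    by (simp add: sum_negf right_diff_distrib sum_subtractf)
  also have "\<dots> = (\<Sum>v\<in>V. (if v = root then dgreen v v / 2 else 0) - (if x = Vert v then dgreen v v / 2 else 0))"
    by (rule sum.cong) (auto simp: slope_sum_Vert[OF x])
  also have "\<dots> = - (case x of Vert u \<Rightarrow> dgreen u u / 2 | Inner _ _ \<Rightarrow> 0)"
    using dgreen_root[OF root_in_V] finite_V root_in_V x by (cases x) (auto simp: sum_subtractf)
  finally show ?thesis .
qed

lemma jroot_diag:
  assumes "x \<in> points V E L"
  shows "jroot x x = (case x of Vert u \<Rightarrow> dgreen u u | Inner e s \<Rightarrow> 2 * diag_quad e s)"
proof (cases x)
  case (Inner e s)
  then have "e \<in> E" "0 < s" "s < L e" using assms by auto
  then show ?thesis using jroot_pt_of_diag[of e s] Inner by (simp add: pt_of_def)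
qed (use assms in simp)

text \<open>Formally \<open>\<integral> f d mu_expl = f(root) + \<integral> r(\<cdot>, root) \<Delta>f / 2\<close>; for \<open>f = jroot x\<close>, whose Laplacian
  is \<open>\<delta>\<^sub>x - \<delta>\<^sub>r\<^sub>o\<^sub>o\<^sub>t\<close>, this is \<open>r(x, root) / 2\<close>.\<close>

lemma integ_mu_expl_jroot:
  assumes x: "x \<in> points V E L"
  shows "integ V E L mu_expl (jroot x) = jroot x x / 2"
  unfolding integ_mu_expl_jroot_edges[OF x] sum_slope_terms[OF x] sum_if_on_edge[OF finite_E] jroot_diag[OF x]
  using x by (cases x) auto

lemma mu_expl_canonical: "is_canonical V E L mu_expl"
  unfolding is_canonical_def
proof (intro conjI exI ballI)
  show "is_gmeas V E L mu_expl" by (rule mu_expl_gmeas)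
  show "integ V E L mu_expl (\<lambda>_. 1) = 1" by (rule mu_expl_mass)
  fix x assume x: "x \<in> points V E L"
  have "integ V E L mu_expl (\<lambda>z. jv V E L z x x) = integ V E L mu_expl (\<lambda>z. 1 * jroot z z + (-2) * jroot x z + jroot x x * 1)"
  proof (rule integ_cong, intro ballI)
    fix z assume z: "z \<in> points V E L"
    show "jv V E L z x x = 1 * jroot z z + (-2) * jroot x z + jroot x x * 1"
      unfolding jv_eq_volt[OF z x] volt_def using x jroot_sym[OF x z] by simp
  qed
  also have "\<dots> = 1 * integ V E L mu_expl (\<lambda>z. jroot z z) + (-2) * integ V E L mu_expl (jroot x) + jroot x x * integ V E L mu_expl (\<lambda>_. 1)"
    by (rule integ_lincomb[OF mu_expl_gmeas continuous_on_edges_jroot_diag continuous_on_edges_jroot[OF x] continuous_on_edges_const])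
  also have "\<dots> = integ V E L mu_expl (\<lambda>z. jroot z z)"
    unfolding integ_mu_expl_jroot[OF x] mu_expl_mass by simp
  finally show "integ V E L mu_expl (\<lambda>z. jv V E L z x x) = integ V E L mu_expl (\<lambda>z. jroot z z)" .
qed

lemma mu_can_canonical: "is_canonical V E L (mu_can V E L)"
  unfolding mu_can_def using mu_expl_canonical by (rule someI)

end

section \<open>The Arakelov--Green function of \<open>\<mu>\<^sub>D\<close>\<close>

context mgraph
begin

lemma integ_mu_can_res:
  assumes w: "w \<in> points V E L"
  shows "integ V E L (mu_can V E L) (\<lambda>z. res V E L z w) = 2 * tau_graph V E L"
proof -
  obtain C where C: "\<forall>x\<in>points V E L. integ V E L (mu_can V E L) (\<lambda>z. jv V E L z x x) = C"
    using mu_can_canonical unfolding is_canonical_def by blast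
  have "Vert (SOME v. v \<in> V) \<in> points V E L" using V_nonempty by (simp add: some_in_eq)
  then have "tau_graph V E L = C / 2" unfolding tau_graph_def Let_def using C by simp
  moreover have "integ V E L (mu_can V E L) (\<lambda>z. res V E L z w) = integ V E L (mu_can V E L) (\<lambda>z. jv V E L z w w)"
    by (rule integ_cong) (use res_sym[OF _ w] w in \<open>auto simp: res_def\<close>)
  ultimately show ?thesis using C w by simp
qed

lemma integ_mu_can_jv:
  assumes x: "x \<in> points V E L" and y: "y \<in> points V E L"
  shows "integ V E L (mu_can V E L) (\<lambda>z. jv V E L z x y) = 2 * tau_graph V E L - res V E L x y / 2"
proof -
  have gm: "is_gmeas V E L (mu_can V E L)" and mass: "integ V E L (mu_can V E L) (\<lambda>_. 1) = 1"
    using mu_can_canonical unfolding is_canonical_def by auto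
  have "integ V E L (mu_can V E L) (\<lambda>z. jv V E L z x y)
      = integ V E L (mu_can V E L) (\<lambda>z. 1/2 * res V E L z x + 1/2 * res V E L z y + (- res V E L x y / 2) * 1)"
  proof (rule integ_cong, intro ballI)
    fix z assume "z \<in> points V E L"
    from jv_eq_res[OF this x y]
    show "jv V E L z x y = 1/2 * res V E L z x + 1/2 * res V E L z y + (- res V E L x y / 2) * 1"
      by (simp add: field_simps)
  qed
  also have "\<dots> = 1/2 * integ V E L (mu_can V E L) (\<lambda>z. res V E L z x) + 1/2 * integ V E L (mu_can V E L) (\<lambda>z. res V E L z y)
      + (- res V E L x y / 2) * integ V E L (mu_can V E L) (\<lambda>_. 1)"
    by (rule integ_lincomb[OF gm continuous_on_edges_res[OF x] continuous_on_edges_res[OF y] continuous_on_edges_const])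
  finally show ?thesis unfolding integ_mu_can_res[OF x] integ_mu_can_res[OF y] mass by simp
qed

lemma sum_divisor_jv:
  assumes x: "x \<in> points V E L" and y: "y \<in> points V E L"
  shows "(\<Sum>v\<in>V. of_int (a v) * jv V E L (Vert v) x y)
    = (res_D V E L a x + res_D V E L a y - of_int (deg V a) * res V E L x y) / 2"
proof -
  have "(\<Sum>v\<in>V. of_int (a v) * jv V E L (Vert v) x y)
      = (\<Sum>v\<in>V. (of_int (a v) * res V E L (Vert v) x + of_int (a v) * res V E L (Vert v) y - of_int (a v) * res V E L x y) / 2)"
  proof (rule sum.cong[OF refl])
    fix v assume "v \<in> V"
    then have "jv V E L (Vert v) x y = (res V E L (Vert v) x + res V E L (Vert v) y - res V E L x y) / 2"
      using jv_eq_res[of "Vert v" x y] x y by simp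
    then show "of_int (a v) * jv V E L (Vert v) x y
      = (of_int (a v) * res V E L (Vert v) x + of_int (a v) * res V E L (Vert v) y - of_int (a v) * res V E L x y) / 2"
      by (simp only:) (simp add: algebra_simps add_divide_distrib diff_divide_distrib)
  qed
  also have "\<dots> = (res_D V E L a x + res_D V E L a y - of_int (deg V a) * res V E L x y) / 2"
    unfolding res_D_def deg_def
    by (simp add: sum_divide_distrib[symmetric] sum.distrib sum_subtractf sum_distrib_right)
  finally show ?thesis .
qed

lemma integ_mu_D: "integ V E L (mu_D V E L a) F
   = ((\<Sum>v\<in>V. of_int (a v) * F (Vert v)) + 2 * integ V E L (mu_can V E L) F) / (of_int (deg V a) + 2)"
proof -
  define D where "D = (of_int (deg V a) + 2 :: real)"
  have 1: "(\<Sum>v\<in>V. fst (mu_D V E L a) v * F (Vert v)) = ((\<Sum>v\<in>V. of_int (a v) * F (Vert v)) + 2 * (\<Sum>v\<in>V. fst (mu_can V E L) v * F (Vert v))) / D"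
    unfolding mu_D_def D_def by (simp add: sum_divide_distrib sum_distrib_left sum.distrib[symmetric] field_simps)
  have 2: "integral {0..L e} (\<lambda>t. snd (mu_D V E L a) e t * F (pt_of L e t)) = (2 / D) * integral {0..L e} (\<lambda>t. snd (mu_can V E L) e t * F (pt_of L e t))" for e
  proof -
    have "integral {0..L e} (\<lambda>t. snd (mu_D V E L a) e t * F (pt_of L e t)) = integral {0..L e} (\<lambda>t. (2 / D) * (snd (mu_can V E L) e t * F (pt_of L e t)))"
      by (rule integral_cong) (simp add: mu_D_def D_def)
    then show ?thesis by (simp only: integral_mult_right)
  qed
  have 3: "(\<Sum>e\<in>E. 2 / D * integral {0..L e} (\<lambda>t. snd (mu_can V E L) e t * F (pt_of L e t)))
     = 2 / D * (\<Sum>e\<in>E. integral {0..L e} (\<lambda>t. snd (mu_can V E L) e t * F (pt_of L e t)))"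
    by (simp add: sum_distrib_left)
  show ?thesis unfolding integ_def 1 2 3 D_def[symmetric]
    by (simp add: add_divide_distrib)
qed

lemma g_mu_D_eq_tau_D:
  assumes x: "x \<in> points V E L" and y: "y \<in> points V E L" and deg: "deg V a \<noteq> -2"
  shows "g_mu V E L (mu_D V E L a) x y = tau_D V E L a x y - res V E L x y / 2"
proof -
  have "real_of_int (deg V a) + 2 \<noteq> 0" using deg by linarith
  then show ?thesis
    unfolding g_mu_def tau_D_def integ_mu_D sum_divisor_jv[OF x y] integ_mu_can_jv[OF x y]
    by (simp add: field_simps)
qed

end

section \<open>Resistance between points of edges\<close>

text \<open>The left-hand sides are \<open>jroot_pt_of_pt_of\<close> written out in the values of \<open>dgreen\<close> at the endpoints.\<close>

lemma tent_kernel_res_same_edge: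
  fixes kpp kpq kqp kqq l x y :: real
  assumes l: "l > 0" and s: "kqp = kpq"
  shows "((1 - x / l) * ((1 - x / l) * kpp + (x / l) * kqp) + (x / l) * ((1 - x / l) * kpq + (x / l) * kqq) + tent l x x)
       + ((1 - y / l) * ((1 - y / l) * kpp + (y / l) * kqp) + (y / l) * ((1 - y / l) * kpq + (y / l) * kqq) + tent l y y)
       - 2 * ((1 - y / l) * ((1 - x / l) * kpp + (x / l) * kqp) + (y / l) * ((1 - x / l) * kpq + (x / l) * kqq) + tent l x y)
     = \<bar>x - y\<bar> - (x - y)\<^sup>2 * (l - (kpp + kqq - 2 * kpq)) / l\<^sup>2"
proof (cases "x \<le> y")
  case True
  then have a: "\<bar>y - x\<bar> = y - x" "\<bar>x - y\<bar> = y - x" by auto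
  show ?thesis unfolding tent_def a s using l by (simp add: power2_eq_square field_simps)
next
  case False
  then have a: "\<bar>y - x\<bar> = x - y" "\<bar>x - y\<bar> = x - y" by auto
  show ?thesis unfolding tent_def a s using l by (simp add: power2_eq_square field_simps)
qed

lemma tent_kernel_res_two_edges:
  fixes k :: "'v \<Rightarrow> 'v \<Rightarrow> real" and li lj x y :: real
  assumes li: "li > 0" and lj: "lj > 0"
    and s1: "k va ua = k ua va" and s2: "k ub ua = k ua ub" and s3: "k vb ua = k ua vb"
    and s4: "k ub va = k va ub" and s5: "k vb va = k va vb" and s6: "k vb ub = k ub vb"
  defines "res2 \<equiv> \<lambda>a b. k a a + k b b - 2 * k a b"
  shows "- (((1 - x / li) * ((1 - x / li) * k ua ua + (x / li) * k va ua) + (x / li) * ((1 - x / li) * k ua va + (x / li) * k va va) + tent li x x)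
       + ((1 - y / lj) * ((1 - y / lj) * k ub ub + (y / lj) * k vb ub) + (y / lj) * ((1 - y / lj) * k ub vb + (y / lj) * k vb vb) + tent lj y y)
       - 2 * ((1 - y / lj) * ((1 - x / li) * k ua ub + (x / li) * k va ub) + (y / lj) * ((1 - x / li) * k ua vb + (x / li) * k va vb))) / 2
     = x\<^sup>2 * (li - res2 ua va) / (2 * li\<^sup>2)
       + y\<^sup>2 * (lj - res2 ub vb) / (2 * lj\<^sup>2)
       - x * y / (li * lj) * ((res2 ub ua + res2 ub vb - res2 ua vb) / 2 - (res2 ub va + res2 ub vb - res2 va vb) / 2)
       - x / (2 * li) * (li - 2 * ((res2 ua va + res2 ua ub - res2 va ub) / 2))
       - y / (2 * lj) * (lj - 2 * ((res2 ub ua + res2 ub vb - res2 ua vb) / 2))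
       - res2 ua ub / 2"
  unfolding res2_def tent_def s1 s2 s3 s4 s5 s6 using li lj by (simp add: power2_eq_square field_simps)

context mgraph
begin

lemma res_Vert: "a \<in> V \<Longrightarrow> b \<in> V \<Longrightarrow> res V E L (Vert a) (Vert b) = dgreen a a + dgreen b b - 2 * dgreen a b"
  using res_eq_jroot[of "Vert a" "Vert b"] by simp

lemma jv_Vert:
  "a \<in> V \<Longrightarrow> b \<in> V \<Longrightarrow> c \<in> V
    \<Longrightarrow> jv V E L (Vert a) (Vert b) (Vert c) = (res V E L (Vert a) (Vert b) + res V E L (Vert a) (Vert c) - res V E L (Vert b) (Vert c)) / 2"
  using jv_eq_res[of "Vert a" "Vert b" "Vert c"] by simp

lemma res_same_edge:
  assumes e: "(p, q) \<in> E" and x: "x \<in> {0..L (p, q)}" and y: "y \<in> {0..L (p, q)}"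
  shows "res V E L (pt_of L (p, q) x) (pt_of L (p, q) y)
    = \<bar>x - y\<bar> - (x - y)\<^sup>2 * (L (p, q) - res V E L (Vert p) (Vert q)) / (L (p, q))\<^sup>2"
proof -
  have p: "p \<in> V" and q: "q \<in> V" using fst_in_V[OF e] snd_in_V[OF e] by auto
  have x0: "0 \<le> x" "x \<le> L (p, q)" and y0: "0 \<le> y" "y \<le> L (p, q)" using x y by auto
  show ?thesis
    unfolding res_eq_jroot[OF pt_of_in_points[OF e x0] pt_of_in_points[OF e y0]] res_Vert[OF p q]
      jroot_pt_of_pt_of[OF e x0 e x0] jroot_pt_of_pt_of[OF e y0 e y0] jroot_pt_of_pt_of[OF e x0 e y0]
    using tent_kernel_res_same_edge[OF L_pos[OF e] dgreen_sym[OF q p], of x "dgreen p p" "dgreen q q" y]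
    by simp
qed

lemma res_distinct_edges:
  assumes ei: "(p, q) \<in> E" and ej: "(p', q') \<in> E" and ne: "(p, q) \<noteq> (p', q')"
    and x: "x \<in> {0..L (p, q)}" and y: "y \<in> {0..L (p', q')}"
  shows "- res V E L (pt_of L (p, q) x) (pt_of L (p', q') y) / 2 =
      x\<^sup>2 * (L (p, q) - res V E L (Vert p) (Vert q)) / (2 * (L (p, q))\<^sup>2)
    + y\<^sup>2 * (L (p', q') - res V E L (Vert p') (Vert q')) / (2 * (L (p', q'))\<^sup>2)
    - x * y / (L (p, q) * L (p', q')) *
        (jv V E L (Vert p') (Vert p) (Vert q') - jv V E L (Vert p') (Vert q) (Vert q'))
    - x / (2 * L (p, q)) * (L (p, q) - 2 * jv V E L (Vert p) (Vert q) (Vert p'))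
    - y / (2 * L (p', q')) * (L (p', q') - 2 * jv V E L (Vert p') (Vert p) (Vert q'))
    - res V E L (Vert p) (Vert p') / 2"
proof -
  have li: "L (p, q) > 0" and lj: "L (p', q') > 0" using L_pos[OF ei] L_pos[OF ej] .
  have Vi: "p \<in> V" "q \<in> V" and Vj: "p' \<in> V" "q' \<in> V"
    using fst_in_V[OF ei] snd_in_V[OF ei] fst_in_V[OF ej] snd_in_V[OF ej] by auto
  have x0: "0 \<le> x" "x \<le> L (p, q)" and y0: "0 \<le> y" "y \<le> L (p', q')" using x y by auto
  note kernel = tent_kernel_res_two_edges[where k=dgreen and ua=p and va=q and ub=p' and vb=q'
      and li="L (p, q)" and lj="L (p', q')" and x=x and y=y, OF li lj dgreen_sym[OF Vi(2) Vi(1)]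
      dgreen_sym[OF Vj(1) Vi(1)] dgreen_sym[OF Vj(2) Vi(1)] dgreen_sym[OF Vj(1) Vi(2)]
      dgreen_sym[OF Vj(2) Vi(2)] dgreen_sym[OF Vj(2) Vj(1)]]
  show ?thesis
    unfolding res_eq_jroot[OF pt_of_in_points[OF ei x0] pt_of_in_points[OF ej y0]]
      jroot_pt_of_pt_of[OF ei x0 ei x0] jroot_pt_of_pt_of[OF ej y0 ej y0] jroot_pt_of_pt_of[OF ei x0 ej y0]
      if_not_P[OF ne] if_True jv_Vert[OF Vj(1) Vi(1) Vj(2)] jv_Vert[OF Vj(1) Vi(2) Vj(2)] jv_Vert[OF Vi Vj(1)]
      res_Vert[OF Vi] res_Vert[OF Vj] res_Vert[OF Vj(1) Vi(1)] res_Vert[OF Vj(1) Vi(2)] res_Vert[OF Vi(1) Vj(2)]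
      res_Vert[OF Vi(2) Vj(2)] res_Vert[OF Vi(1) Vj(1)] res_Vert[OF Vi(2) Vj(1)]
    using kernel by simp
qed

end

theorem theorem3p8:
  fixes V :: "'v set" and E :: "('v \<times> 'v) set" and L :: "'v \<times> 'v \<Rightarrow> real"
    and a :: "'v \<Rightarrow> int"
  assumes "metrized_graph V E L"
    and "\<forall>v. v \<notin> V \<longrightarrow> a v = 0"
    and "deg V a \<noteq> -2"
  shows "(\<forall>p q. (p, q) \<in> E \<and> \<not> is_bridge V E (p, q) \<longrightarrow>
            (\<forall>x\<in>{0..L (p, q)}. \<forall>y\<in>{0..L (p, q)}.
              g_mu V E L (mu_D V E L a) (pt_of L (p, q) x) (pt_of L (p, q) y) =
                tau_D V E L a (pt_of L (p, q) x) (pt_of L (p, q) y) - \<bar>x - y\<bar> / 2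
                + (x - y)\<^sup>2 * (L (p, q) - res V E L (Vert p) (Vert q)) / (2 * (L (p, q))\<^sup>2)))
       \<and> (\<forall>pi qi pj qj. (pi, qi) \<in> E \<and> (pj, qj) \<in> E \<and> (pi, qi) \<noteq> (pj, qj)
            \<and> \<not> is_bridge V E (pi, qi) \<and> \<not> is_bridge V E (pj, qj) \<longrightarrow>
            (\<forall>x\<in>{0..L (pi, qi)}. \<forall>y\<in>{0..L (pj, qj)}.
              g_mu V E L (mu_D V E L a) (pt_of L (pi, qi) x) (pt_of L (pj, qj) y) =
                tau_D V E L a (pt_of L (pi, qi) x) (pt_of L (pj, qj) y)
                + x\<^sup>2 * (L (pi, qi) - res V E L (Vert pi) (Vert qi)) / (2 * (L (pi, qi))\<^sup>2)
                + y\<^sup>2 * (L (pj, qj) - res V E L (Vert pj) (Vert qj)) / (2 * (L (pj, qj))\<^sup>2)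
                - x * y / (L (pi, qi) * L (pj, qj)) *
                    (jv V E L (Vert pj) (Vert pi) (Vert qj) - jv V E L (Vert pj) (Vert qi) (Vert qj))
                - x / (2 * L (pi, qi)) * (L (pi, qi) - 2 * jv V E L (Vert pi) (Vert qi) (Vert pj))
                - y / (2 * L (pj, qj)) * (L (pj, qj) - 2 * jv V E L (Vert pj) (Vert pi) (Vert qj))
                - res V E L (Vert pi) (Vert pj) / 2))"
proof -
  interpret mgraph V E L by unfold_locales (rule assms(1))
  have g: "g_mu V E L (mu_D V E L a) (pt_of L e x) (pt_of L e' y)
      = tau_D V E L a (pt_of L e x) (pt_of L e' y) - res V E L (pt_of L e x) (pt_of L e' y) / 2"
    if "e \<in> E" "x \<in> {0..L e}" "e' \<in> E" "y \<in> {0..L e'}" for e x e' y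
    using g_mu_D_eq_tau_D[OF pt_of_in_points pt_of_in_points assms(3)] that by simp
  \<comment> \<open>The formulas hold for every edge.\<close>
  show ?thesis
    apply (intro conjI allI impI ballI)
    subgoal using g res_same_edge by (simp add: diff_divide_distrib)
    subgoal using g res_distinct_edges by simp
    done
qed

end
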